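(* A unital formal multiplication $F$ on $V$ is linear if and only if there exists a two-sided ideal $I$ of finite codimension in the algebra $k[F]$ such that $I\cap\mathrm{Prim}(k[F])=I\cap V=0$.
   Context: $k$ is a field of characteristic $0$; $k[V]$ is the symmetric coalgebra of $V$ (elements of $V$ primitive, counit $\epsilon$, projection $\pi_V$ onto $V$); Sweedler notation. A unital formal multiplication on $V$ is a linear $F\colon k[V]\otimes k[V]\to V$ with $F(\mu\otimes1)=\pi_V(\mu)=F(1\otimes\mu)$; a formal map $\theta\colon k[V]\to W$ ($\theta(1)=0$) induces the coalgebra morphism $\theta'(\mu)=\sum_{n\ge0}\frac1{n!}\theta(\mu_{(1)})\cdots\theta(\mu_{(n)})$; $k[F]$ is $k[V]$ with product $F'$. A homomorphism $\psi\colon F\to H$ ($H$ on $W$) is a formal map $\psi\colon k[V]\to W$ with $H(\psi'(\mu_1)\otimes\psi'(\mu_2))=\psi(F'(\mu_1\otimes\mu_2))$. $F$ is linear if there exist a finite-dimensional vector space $A$ with a bilinear product $*$ and a homomorphism $\psi\colon F\to G$, where $G(\mu_1\otimes\mu_2)=\epsilon(\mu_2)\pi_A(\mu_1)+\epsilon(\mu_1)\pi_A(\mu_2)+\pi_A(\mu_1)*\pi_A(\mu_2)$ on $A$, such that the induced map $k[A]^*\to k[V]^*$, $g\mapsto g\circ\psi'$, is surjective. *)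

theory Defs
  imports Main "HOL-Library.Poly_Mapping" "HOL-Library.Multiset"
begin

text \<open>
V has a basis indexed by a type 'u (every vector space has a basis), so
V = ('u =>0 'k).  The symmetric coalgebra k[V] is represented on its monomial
basis: a monomial is a multiset of basis indices, so k[V] = ('u multiset =>0 'k);
the coalgebra structure is Delta(x^a) = sum_{b+c=a} C(a,b) x^b (x) x^c, with V primitive.
The tensor k[V] (x) k[V] is identified (as a coalgebra) with k[V (+) V], the monomial
x^a (x) x^b being the multiset over 'u + 'u given by tmono a b.
A linear map out of k[V] (or k[V](x)k[V]) is given by its (arbitrary) values on monomials.
\<close>

definition sc :: "'k::comm_ring_1 \<Rightarrow> ('a \<Rightarrow>\<^sub>0 'k) \<Rightarrow> ('a \<Rightarrow>\<^sub>0 'k)" where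
  "sc c v = Poly_Mapping.map (\<lambda>x. c * x) v"

definition linext :: "('m \<Rightarrow> ('w \<Rightarrow>\<^sub>0 'k::comm_ring_1)) \<Rightarrow> ('m \<Rightarrow>\<^sub>0 'k) \<Rightarrow> ('w \<Rightarrow>\<^sub>0 'k)" where
  "linext \<theta> p = (\<Sum>m\<in>Poly_Mapping.keys p. sc (Poly_Mapping.lookup p m) (\<theta> m))"

definition bilin :: "('m \<Rightarrow> 'm \<Rightarrow> ('w \<Rightarrow>\<^sub>0 'k::comm_ring_1)) \<Rightarrow> ('m \<Rightarrow>\<^sub>0 'k) \<Rightarrow> ('m \<Rightarrow>\<^sub>0 'k) \<Rightarrow> ('w \<Rightarrow>\<^sub>0 'k)" where
  "bilin H p q = (\<Sum>m\<in>Poly_Mapping.keys p. \<Sum>m'\<in>Poly_Mapping.keys q. sc (Poly_Mapping.lookup p m * Poly_Mapping.lookup q m') (H m m'))"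

text \<open>the element of k[U] given by a vector of U (degree one part)\<close>
definition lin :: "('u \<Rightarrow>\<^sub>0 'k::comm_ring_1) \<Rightarrow> ('u multiset \<Rightarrow>\<^sub>0 'k)" where
  "lin v = (\<Sum>i\<in>Poly_Mapping.keys v. Poly_Mapping.single {#i#} (Poly_Mapping.lookup v i))"

definition piV :: "'u multiset \<Rightarrow> ('u \<Rightarrow>\<^sub>0 'k::comm_ring_1)" where
  "piV a = (if size a = 1 then (\<Sum>i\<in>set_mset a. Poly_Mapping.single i 1) else 0)"

definition eps :: "'u multiset \<Rightarrow> 'k::comm_ring_1" where
  "eps a = (if a = {#} then 1 else 0)"

definition mfact :: "'u multiset \<Rightarrow> 'k::comm_ring_1" where
  "mfact a = (\<Prod>i\<in>set_mset a. of_nat (fact (count a i)))"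

text \<open>coefficient of x^{xs_1} (x) ... (x) x^{xs_n} in the iterated coproduct of x^a\<close>
definition mcoef :: "'u multiset \<Rightarrow> 'u multiset list \<Rightarrow> 'k::field" where
  "mcoef a xs = mfact a / prod_list (map mfact xs)"

definition decomp :: "nat \<Rightarrow> 'u multiset \<Rightarrow> 'u multiset list set" where
  "decomp n a = {xs. length xs = n \<and> sum_list xs = a}"

text \<open>theta'(x^a) = sum_n 1/n! theta(mu_(1))...theta(mu_(n)), product in k[W]
  (terms with n > deg a vanish since theta(1) = 0)\<close>
definition ind :: "('u multiset \<Rightarrow> ('w \<Rightarrow>\<^sub>0 'k::field_char_0)) \<Rightarrow> 'u multiset \<Rightarrow> ('w multiset \<Rightarrow>\<^sub>0 'k)" where
  "ind \<theta> a = (\<Sum>n\<in>{0..size a}. sc (1 / of_nat (fact n))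
       (\<Sum>xs\<in>decomp n a. sc (mcoef a xs) (prod_list (map (\<lambda>x. lin (\<theta> x)) xs))))"

definition indL :: "('u multiset \<Rightarrow> ('w \<Rightarrow>\<^sub>0 'k::field_char_0)) \<Rightarrow> ('u multiset \<Rightarrow>\<^sub>0 'k) \<Rightarrow> ('w multiset \<Rightarrow>\<^sub>0 'k)" where
  "indL \<theta> p = linext (ind \<theta>) p"

definition tmono :: "'u multiset \<Rightarrow> 'u multiset \<Rightarrow> ('u + 'u) multiset" where
  "tmono a b = image_mset Inl a + image_mset Inr b"

definition tensF :: "('u multiset \<Rightarrow> 'u multiset \<Rightarrow> 'x) \<Rightarrow> ('u + 'u) multiset \<Rightarrow> 'x" where
  "tensF F m = F (image_mset projl (filter_mset isl m)) (image_mset projr (filter_mset (\<lambda>x. \<not> isl x) m))"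

definition unital_fm :: "('u multiset \<Rightarrow> 'u multiset \<Rightarrow> ('u \<Rightarrow>\<^sub>0 'k::comm_ring_1)) \<Rightarrow> bool" where
  "unital_fm F \<longleftrightarrow> (\<forall>a. F a {#} = piV a \<and> F {#} a = piV a)"

definition mulF :: "('u multiset \<Rightarrow> 'u multiset \<Rightarrow> ('u \<Rightarrow>\<^sub>0 'k::field_char_0)) \<Rightarrow>
    ('u multiset \<Rightarrow>\<^sub>0 'k) \<Rightarrow> ('u multiset \<Rightarrow>\<^sub>0 'k) \<Rightarrow> ('u multiset \<Rightarrow>\<^sub>0 'k)" where
  "mulF F p q = (\<Sum>a\<in>Poly_Mapping.keys p. \<Sum>b\<in>Poly_Mapping.keys q. sc (Poly_Mapping.lookup p a * Poly_Mapping.lookup q b) (ind (tensF F) (tmono a b)))"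

definition fm_hom :: "('u multiset \<Rightarrow> 'u multiset \<Rightarrow> ('u \<Rightarrow>\<^sub>0 'k::field_char_0)) \<Rightarrow>
    ('w multiset \<Rightarrow> 'w multiset \<Rightarrow> ('w \<Rightarrow>\<^sub>0 'k)) \<Rightarrow> ('u multiset \<Rightarrow> ('w \<Rightarrow>\<^sub>0 'k)) \<Rightarrow> bool" where
  "fm_hom F H \<psi> \<longleftrightarrow> \<psi> {#} = 0 \<and>
     (\<forall>p q. bilin H (indL \<psi> p) (indL \<psi> q) = linext \<psi> (mulF F p q))"

text \<open>bilinear product on A = span of basis vectors 0..<n, via structure constants\<close>
definition prodA :: "(nat \<Rightarrow> nat \<Rightarrow> (nat \<Rightarrow>\<^sub>0 'k::comm_ring_1)) \<Rightarrow> (nat \<Rightarrow>\<^sub>0 'k) \<Rightarrow> (nat \<Rightarrow>\<^sub>0 'k) \<Rightarrow> (nat \<Rightarrow>\<^sub>0 'k)" where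
  "prodA c u v = (\<Sum>i\<in>Poly_Mapping.keys u. \<Sum>j\<in>Poly_Mapping.keys v. sc (Poly_Mapping.lookup u i * Poly_Mapping.lookup v j) (c i j))"

definition Gmul :: "(nat \<Rightarrow> nat \<Rightarrow> (nat \<Rightarrow>\<^sub>0 'k::comm_ring_1)) \<Rightarrow> nat multiset \<Rightarrow> nat multiset \<Rightarrow> (nat \<Rightarrow>\<^sub>0 'k)" where
  "Gmul c a b = sc (eps b) (piV a) + sc (eps a) (piV b) + prodA c (piV a) (piV b)"

text \<open>F is linear: exists a finite-dimensional algebra (A, *) (A = span of basis 0..<n,
  product given by structure constants c) and a homomorphism psi : F -> G such that
  the full duals map k[A]^* -> k[V]^*, g |-> g o psi', is surjective (linear functionals on
  k[A], k[V] being arbitrary functions on monomials)\<close>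
definition linear_fm :: "('u multiset \<Rightarrow> 'u multiset \<Rightarrow> ('u \<Rightarrow>\<^sub>0 'k::field_char_0)) \<Rightarrow> bool" where
  "linear_fm F \<longleftrightarrow> (\<exists>(n::nat) c (\<psi>::'u multiset \<Rightarrow> (nat \<Rightarrow>\<^sub>0 'k)).
      (\<forall>i<n. \<forall>j<n. Poly_Mapping.keys (c i j) \<subseteq> {..<n}) \<and>
      (\<forall>a. Poly_Mapping.keys (\<psi> a) \<subseteq> {..<n}) \<and>
      fm_hom F (Gmul c) \<psi> \<and>
      (\<forall>f::'u multiset \<Rightarrow> 'k. \<exists>g::nat multiset \<Rightarrow> 'k.
         \<forall>a. f a = (\<Sum>m\<in>Poly_Mapping.keys (ind \<psi> a). Poly_Mapping.lookup (ind \<psi> a) m * g m)))"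

definition copr :: "('u multiset \<Rightarrow>\<^sub>0 'k::field) \<Rightarrow> (('u + 'u) multiset \<Rightarrow>\<^sub>0 'k)" where
  "copr p = (\<Sum>a\<in>Poly_Mapping.keys p. sc (Poly_Mapping.lookup p a)
      (\<Sum>b\<in>{b. b \<subseteq># a}. Poly_Mapping.single (tmono b (a - b)) (mcoef a [b, a - b])))"

definition tensor :: "('u multiset \<Rightarrow>\<^sub>0 'k::comm_ring_1) \<Rightarrow> ('u multiset \<Rightarrow>\<^sub>0 'k) \<Rightarrow> (('u + 'u) multiset \<Rightarrow>\<^sub>0 'k)" where
  "tensor p q = (\<Sum>a\<in>Poly_Mapping.keys p. \<Sum>b\<in>Poly_Mapping.keys q. Poly_Mapping.single (tmono a b) (Poly_Mapping.lookup p a * Poly_Mapping.lookup q b))"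

definition Prim :: "('u multiset \<Rightarrow>\<^sub>0 'k::field) set" where
  "Prim = {p. copr p = tensor p 1 + tensor 1 p}"

definition Vsub :: "('u multiset \<Rightarrow>\<^sub>0 'k::comm_ring_1) set" where
  "Vsub = range lin"

text \<open>two-sided ideal of the (not necessarily associative) algebra k[F]\<close>
definition twosided_ideal :: "('u multiset \<Rightarrow> 'u multiset \<Rightarrow> ('u \<Rightarrow>\<^sub>0 'k::field_char_0)) \<Rightarrow>
     ('u multiset \<Rightarrow>\<^sub>0 'k) set \<Rightarrow> bool" where
  "twosided_ideal F I \<longleftrightarrow> 0 \<in> I \<and> (\<forall>x\<in>I. \<forall>y\<in>I. x + y \<in> I) \<and> (\<forall>c. \<forall>x\<in>I. sc c x \<in> I) \<and>
     (\<forall>x\<in>I. \<forall>p. mulF F p x \<in> I \<and> mulF F x p \<in> I)"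

definition finite_codim :: "('u multiset \<Rightarrow>\<^sub>0 'k::field) set \<Rightarrow> bool" where
  "finite_codim I \<longleftrightarrow> (\<exists>bs::('u multiset \<Rightarrow>\<^sub>0 'k) list. \<forall>p. \<exists>cs::'k list.
      length cs = length bs \<and> p - (\<Sum>j<length bs. sc (cs ! j) (bs ! j)) \<in> I)"

end

theory Submission
  imports Defs "HOL-Combinatorics.Multiset_Permutations"
begin

(* (=>) Given a homomorphism psi : F -> G into the formal multiplication G of a
   finite-dimensional algebra (A, * ), the shape of G gives the product rule
     psi(pq) = eps(q) psi(p) + eps(p) psi(q) + psi(p) * psi(q),
   so I = {p. eps(p) = 0 \<and> psi(p) = 0} is a two-sided ideal.  It is the common kernel
   of finitely many linear functionals, hence of finite codimension; surjectivity of
   the dual map psi'^* forces psi' to be injective on V, so I \<inter> V = 0; and in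
   characteristic 0 every primitive element of k[V] lies in V.

   (<=) Since I \<inter> V = 0 and I has finite codimension, V is finite-dimensional and its
   basis extends to a finite family E_0, ..., E_{N-1} that is a basis of k[F] modulo I.
   Coordinates with respect to E define A = k^N with structure constants
   c_ij = coords(E_i E_j), and psi(x^a) = coords(x^a - eps(a) 1) is a homomorphism
   F -> G.  The dual map is surjective because psi' is unitriangular with respect to
   degree: the top-degree part of psi'(x^a) is the monomial x^{idx(a)}. *)

abbreviation (input) LK where "LK \<equiv> Poly_Mapping.lookup"
abbreviation (input) KS where "KS \<equiv> Poly_Mapping.keys"
abbreviation (input) SG where "SG \<equiv> Poly_Mapping.single"

section \<open>Linear algebra on finitely supported functions\<close>

lemma lookup_sc[simp]: "LK (sc c v) m = c * LK v m"
  by (simp add: sc_def Poly_Mapping.map.rep_eq when_def)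

lemma sc_add: "sc c (x + y) = sc c x + sc c y"
  by (rule poly_mapping_eqI) (simp add: lookup_add distrib_left)
lemma sc_add_left: "sc (c + d) x = sc c x + sc d x"
  by (rule poly_mapping_eqI) (simp add: lookup_add distrib_right)
lemma sc_sc[simp]: "sc c (sc d x) = sc (c * d) x"
  by (rule poly_mapping_eqI) (simp add: mult.assoc)
lemma sc_one[simp]: "sc 1 x = x"
  by (rule poly_mapping_eqI) simp
lemma sc_zero[simp]: "sc 0 x = 0"
  by (rule poly_mapping_eqI) simp
lemma sc_zero2[simp]: "sc c 0 = 0"
  by (rule poly_mapping_eqI) simp
lemma sc_diff: "sc c (x - y) = sc c x - sc c y"
  by (rule poly_mapping_eqI) (simp add: lookup_minus algebra_simps)
lemma sc_diff_left: "sc (c - d) x = sc c x - sc d x"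
  by (rule poly_mapping_eqI) (simp add: lookup_minus algebra_simps)
lemma sc_neg_left: "sc (- c) x = - sc c x"
  by (rule poly_mapping_eqI) simp
lemma sc_sum: "sc c (sum f A) = (\<Sum>a\<in>A. sc c (f a))"
  by (rule poly_mapping_eqI) (simp add: lookup_sum sum_distrib_left)
lemma sum_sc_left: "sc (sum f A) x = (\<Sum>a\<in>A. sc (f a) x)"
  by (rule poly_mapping_eqI) (simp add: lookup_sum sum_distrib_right)
lemma keys_sc: "KS (sc c x) \<subseteq> KS x"
  by (auto simp: in_keys_iff)
lemma sc_single: "sc c (SG m d) = SG m (c * d)"
  by (rule poly_mapping_eqI) (simp add: lookup_single when_def)

text \<open>With scalar multiplication sc, finitely supported functions form a vector space;
  we use the library's dimension bounds through this interpretation.\<close>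
interpretation pv: vector_space "sc :: 'k::field \<Rightarrow> ('a \<Rightarrow>\<^sub>0 'k) \<Rightarrow> ('a \<Rightarrow>\<^sub>0 'k)"
  by unfold_locales (simp_all add: sc_add sc_add_left)

lemma poly_expansion: "(\<Sum>m\<in>KS p. SG m (LK p m)) = p"
proof -
  have *: "finite I \<Longrightarrow> LK (\<Sum>i\<in>I. SG i (LK p i)) j = (if j \<in> I then LK p j else 0)" for I j
    by (induction I rule: finite_induct) (auto simp: lookup_single lookup_add when_def)
  show ?thesis by (rule poly_mapping_eqI) (simp add: * in_keys_iff)
qed

lemma lookup_sum_single: "finite U \<Longrightarrow> LK (\<Sum>u\<in>U. SG u (lam u)) v = (if v \<in> U then lam v else 0)"
  by (simp add: lookup_sum lookup_single when_def)

definition lmap :: "(('a \<Rightarrow>\<^sub>0 'k::comm_ring_1) \<Rightarrow> ('b \<Rightarrow>\<^sub>0 'k)) \<Rightarrow> bool" where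
  "lmap L \<longleftrightarrow> (\<forall>x y. L (x + y) = L x + L y) \<and> (\<forall>c x. L (sc c x) = sc c (L x))"

lemma lmap_add: "lmap L \<Longrightarrow> L (x + y) = L x + L y"
  by (simp add: lmap_def)

lemma lmap_sc: "lmap L \<Longrightarrow> L (sc c x) = sc c (L x)"
  by (simp add: lmap_def)

lemma lmap_zero: "lmap L \<Longrightarrow> L 0 = 0"
  using lmap_sc[of L 0 0] by simp

lemma lmap_sum: "lmap L \<Longrightarrow> L (sum f A) = (\<Sum>a\<in>A. L (f a))"
  by (induction A rule: infinite_finite_induct) (auto simp: lmap_zero lmap_add)

lemma lmap_sum_sc: "lmap L \<Longrightarrow> L (\<Sum>i\<in>A. sc (f i) (g i)) = (\<Sum>i\<in>A. sc (f i) (L (g i)))"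
  by (simp add: lmap_sum lmap_sc)

lemma lmap_diff: "lmap L \<Longrightarrow> L (x - y) = L x - L y"
  using lmap_add[of L "x - y" y] by (simp add: eq_diff_eq)

definition lfun :: "(('a \<Rightarrow>\<^sub>0 'k::comm_ring_1) \<Rightarrow> 'k) \<Rightarrow> bool" where
  "lfun f \<longleftrightarrow> (\<forall>x y. f (x + y) = f x + f y) \<and> (\<forall>c x. f (sc c x) = c * f x)"

lemma lfun_add: "lfun f \<Longrightarrow> f (x + y) = f x + f y"
  by (simp add: lfun_def)

lemma lfun_sc: "lfun f \<Longrightarrow> f (sc c x) = c * f x"
  by (simp add: lfun_def)

lemma lfun_zero: "lfun f \<Longrightarrow> f 0 = 0"
  using lfun_sc[of f 0 0] by simp

lemma lfun_diff: "lfun f \<Longrightarrow> f (x - y) = f x - f y"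
  using lfun_add[of f "x - y" y] by (simp add: eq_diff_eq)

lemma lfun_sum: "lfun f \<Longrightarrow> f (sum g A) = (\<Sum>a\<in>A. f (g a))"
  by (induction A rule: infinite_finite_induct) (auto simp: lfun_zero lfun_add)

lemma lfun_lookup: "lfun (\<lambda>p. LK p m)"
  by (simp add: lfun_def lookup_add)

lemma lfun_lookup_lmap: "lmap L \<Longrightarrow> lfun (\<lambda>p. LK (L p) j)"
  by (simp add: lfun_def lmap_def lookup_add)

lemma lfun_pair: "lfun (\<lambda>Q. \<Sum>m\<in>KS Q. LK Q m * g m)"
proof -
  have "(\<Sum>m\<in>KS (x+y). LK (x+y) m * g m) = (\<Sum>m\<in>KS x. LK x m * g m) + (\<Sum>m\<in>KS y. LK y m * g m)" for x y
    by (rule setsum_keys_plus_distrib[where f="\<lambda>m v. v * g m"]) (auto simp: distrib_right)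
  moreover have "(\<Sum>m\<in>KS (sc c x). LK (sc c x) m * g m) = c * (\<Sum>m\<in>KS x. LK x m * g m)" for c x
  proof -
    have "(\<Sum>m\<in>KS (sc c x). LK (sc c x) m * g m) = (\<Sum>m\<in>KS x. LK (sc c x) m * g m)"
      by (rule sum.mono_neutral_left) (auto simp: in_keys_iff)
    then show ?thesis by (simp add: sum_distrib_left mult.assoc)
  qed
  ultimately show ?thesis by (simp add: lfun_def)
qed

lemma linext_superset:
  assumes "finite S" "KS p \<subseteq> S"
  shows "linext \<theta> p = (\<Sum>m\<in>S. sc (LK p m) (\<theta> m))"
  unfolding linext_def using assms
  by (intro sum.mono_neutral_left) (auto simp: in_keys_iff)

lemma linext_add: "linext \<theta> (p + q) = linext \<theta> p + linext \<theta> q"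
proof -
  let ?S = "KS p \<union> KS q"
  have "KS (p + q) \<subseteq> ?S" by (rule keys_add)
  then have "linext \<theta> (p + q) = (\<Sum>m\<in>?S. sc (LK (p + q) m) (\<theta> m))"
    by (intro linext_superset) auto
  also have "\<dots> = (\<Sum>m\<in>?S. sc (LK p m) (\<theta> m)) + (\<Sum>m\<in>?S. sc (LK q m) (\<theta> m))"
    by (simp add: lookup_add sc_add_left sum.distrib)
  also have "\<dots> = linext \<theta> p + linext \<theta> q"
    by (simp add: linext_superset[symmetric])
  finally show ?thesis .
qed

lemma linext_sc: "linext \<theta> (sc c p) = sc c (linext \<theta> p)"
proof -
  have "linext \<theta> (sc c p) = (\<Sum>m\<in>KS p. sc (LK (sc c p) m) (\<theta> m))"
    by (intro linext_superset keys_sc) auto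
  then show ?thesis by (simp add: linext_def sc_sum)
qed

lemma lmap_linext: "lmap (linext \<theta>)"
  by (simp add: lmap_def linext_add linext_sc)

lemma linext_zero[simp]: "linext \<theta> 0 = 0"
  by (simp add: linext_def)

lemma linext_single[simp]: "linext \<theta> (SG m c) = sc c (\<theta> m)"
  by (simp add: linext_def)

lemma lookup_linext: "LK (linext \<theta> p) w = (\<Sum>m\<in>KS p. LK p m * LK (\<theta> m) w)"
  by (simp add: linext_def lookup_sum)

lemma linext_fun_add: "linext (\<lambda>m. \<theta> m + \<theta>' m) p = linext \<theta> p + linext \<theta>' p"
  by (simp add: linext_def sc_add sum.distrib)

lemma linext_fun_diff: "linext (\<lambda>m. \<theta> m - \<theta>' m) p = linext \<theta> p - linext \<theta>' p"
  by (simp add: linext_def sc_diff sum_subtractf)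

lemma linext_fun_sc: "linext (\<lambda>m. sc (f m) v) p = sc (\<Sum>m\<in>KS p. LK p m * f m) v"
  by (simp add: linext_def sum_sc_left)

lemma linext_fun_sc2: "linext (\<lambda>m. sc k (\<theta> m)) p = sc k (linext \<theta> p)"
  by (simp add: linext_def sc_sum mult.commute)

lemma linext_id: "linext (\<lambda>m. SG m 1) p = p"
  unfolding linext_def by (simp add: sc_single poly_expansion)

lemma lmap_linext_comp: "lmap L \<Longrightarrow> L (linext \<theta> p) = linext (\<lambda>m. L (\<theta> m)) p"
  unfolding linext_def by (simp add: lmap_sum lmap_sc)

lemma linext_comp: "linext \<phi> (linext \<theta> p) = linext (\<lambda>m. linext \<phi> (\<theta> m)) p"
  by (rule lmap_linext_comp[OF lmap_linext])

lemma lfun_linext: "lfun f \<Longrightarrow> f (linext \<theta> P) = (\<Sum>a\<in>KS P. LK P a * f (\<theta> a))"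
  unfolding linext_def by (simp add: lfun_sum lfun_sc)

lemma linext_swap: "linext (\<lambda>a. linext (\<lambda>b. H a b) q) p = linext (\<lambda>b. linext (\<lambda>a. H a b) p) q"
proof -
  have "linext (\<lambda>a. linext (\<lambda>b. H a b) q) p = (\<Sum>a\<in>KS p. \<Sum>b\<in>KS q. sc (LK p a * LK q b) (H a b))"
    unfolding linext_def by (simp add: sc_sum)
  also have "\<dots> = (\<Sum>b\<in>KS q. \<Sum>a\<in>KS p. sc (LK p a * LK q b) (H a b))"
    by (rule sum.swap)
  also have "\<dots> = linext (\<lambda>b. linext (\<lambda>a. H a b) p) q"
    unfolding linext_def by (simp add: sc_sum mult.commute)
  finally show ?thesis .
qed

lemma lmap_second: "lmap (\<lambda>q. linext (\<lambda>a. linext (\<lambda>b. H a b) q) p)"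
  by (subst linext_swap) (rule lmap_linext)

lemma bilin_linext: "bilin H p q = linext (\<lambda>m. linext (H m) q) p"
  unfolding bilin_def linext_def by (simp add: sc_sum mult.commute)

lemma prodA_linext: "prodA c u v = linext (\<lambda>i. linext (c i) v) u"
  unfolding prodA_def linext_def by (simp add: sc_sum mult.commute)

lemma lmap_prodA1: "lmap (\<lambda>u. prodA c u v)"
  unfolding prodA_linext by (rule lmap_linext)

lemma lmap_prodA2: "lmap (\<lambda>v. prodA c u v)"
  unfolding prodA_linext by (rule lmap_second)

lemma lin_linext: "lin v = linext (\<lambda>i. SG {#i#} 1) v"
  unfolding lin_def linext_def by (simp add: sc_single)

lemma lmap_lin: "lmap lin"
  unfolding lin_linext by (rule lmap_linext)

lemma lin_single[simp]: "lin (SG u c) = SG {#u#} c"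
  by (simp add: lin_linext sc_single)

lemma lin_zero[simp]: "lin 0 = 0"
  by (rule lmap_zero[OF lmap_lin])

lemma lin_sum: "lin (sum f A) = (\<Sum>a\<in>A. lin (f a))"
  by (rule lmap_sum[OF lmap_lin])

lemma lookup_lin_single[simp]: "LK (lin v) {#j#} = LK v j"
proof -
  have "LK (lin v) {#j#} = (\<Sum>i\<in>KS v. LK v i * LK (SG {#i#} (1::'a)) {#j#})"
    by (simp add: lin_linext lookup_linext)
  also have "\<dots> = (\<Sum>i\<in>KS v. if i = j then LK v i else 0)"
    by (intro sum.cong) (auto simp: lookup_single when_def)
  also have "\<dots> = LK v j" by (simp add: in_keys_iff)
  finally show ?thesis .
qed

lemma lookup_lin_other: "size m \<noteq> 1 \<Longrightarrow> LK (lin v) m = 0"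
  by (auto simp: lin_linext lookup_linext lookup_single when_def intro!: sum.neutral)

lemma keys_lin: "KS (lin v) \<subseteq> {m. size m = 1}"
  using lookup_lin_other by (auto simp: in_keys_iff)

lemma lin_inj: "lin v = lin w \<Longrightarrow> v = w"
  by (metis lookup_lin_single poly_mapping_eqI)

lemma lookup_piV: "LK (piV m) j = (if m = {#j#} then 1 else 0)"
proof (cases "size m = 1")
  case True
  then obtain i where "m = {#i#}" using size_1_singleton_mset by blast
  then show ?thesis by (auto simp: piV_def lookup_single when_def)
qed (auto simp: piV_def)

lemma lookup_pi: "LK (linext piV P) j = LK P {#j#}"
proof -
  have "LK (linext piV P) j = (\<Sum>m\<in>KS P. if m = {#j#} then LK P m else 0)"
    by (simp add: lookup_linext lookup_piV if_distrib cong: if_cong)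
  also have "\<dots> = LK P {#j#}" by (simp add: in_keys_iff)
  finally show ?thesis .
qed

lemma sum_eps: "(\<Sum>m\<in>KS P. LK P m * eps m) = LK P {#}"
proof -
  have "(\<Sum>m\<in>KS P. LK P m * eps m) = (\<Sum>m\<in>KS P. if m = {#} then LK P m else 0)"
    by (intro sum.cong) (auto simp: eps_def)
  then show ?thesis by (simp add: in_keys_iff)
qed

lemma zero_Vsub: "0 \<in> Vsub"
  by (auto simp: Vsub_def intro: range_eqI[of _ _ 0])

section \<open>The coalgebra map induced by a formal map\<close>

definition PL :: "('a multiset \<Rightarrow> ('w \<Rightarrow>\<^sub>0 'k::field_char_0)) \<Rightarrow> 'a multiset list \<Rightarrow> ('w multiset \<Rightarrow>\<^sub>0 'k)" where
  "PL \<theta> xs = prod_list (map (\<lambda>x. lin (\<theta> x)) xs)"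

lemma keys_mult_sub:
  assumes "KS f \<subseteq> {m. size m = i}" "KS g \<subseteq> {m. size m = j}"
  shows "KS (f * g) \<subseteq> {m::'w multiset. size m = i + j}"
proof
  fix x assume "x \<in> KS (f * g)"
  then obtain a b where "x = a + b" "a \<in> KS f" "b \<in> KS g" using keys_mult[of f g] by blast
  then show "x \<in> {m. size m = i + j}" using assms by auto
qed

lemma keys_PL: "KS (PL \<theta> xs) \<subseteq> {m. size m = length xs}"
proof (induction xs)
  case Nil then show ?case by (simp add: PL_def)
next
  case (Cons x xs)
  have "KS (lin (\<theta> x) * PL \<theta> xs) \<subseteq> {m. size m = 1 + length xs}"
    by (rule keys_mult_sub[OF keys_lin Cons.IH])
  then show ?case by (simp add: PL_def)
qed

lemma lookup_PL_other: "size m \<noteq> length xs \<Longrightarrow> LK (PL \<theta> xs) m = 0"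
  using keys_PL[of \<theta> xs] by (auto simp: in_keys_iff)

lemma PL_zero: "x \<in> set xs \<Longrightarrow> \<theta> x = 0 \<Longrightarrow> PL \<theta> xs = 0"
  unfolding PL_def by (induction xs) auto

lemma in_set_sub_sum_list: "x \<in> set xs \<Longrightarrow> x \<subseteq># sum_list xs"
  by (induction xs) (auto simp: subset_mset.add_increasing2 subset_mset.add_increasing)

lemma finite_submsets: "finite {b. b \<subseteq># (a::'a multiset)}"
proof -
  have "{b. b \<subseteq># a} \<subseteq> (\<Union>n\<in>{0..size a}. multisets_of_size (set_mset a) n)"
    by (auto simp: multisets_of_size_def size_mset_mono dest: mset_subset_eqD)
  then show ?thesis by (rule finite_subset) auto
qed

lemma finite_decomp: "finite (decomp n a)"
proof -
  have "decomp n a \<subseteq> {xs. set xs \<subseteq> {b. b \<subseteq># a} \<and> length xs = n}"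
    by (auto simp: decomp_def in_set_sub_sum_list)
  then show ?thesis by (rule finite_subset) (intro finite_lists_length_eq finite_submsets)
qed

lemma mfact_nz: "mfact a \<noteq> (0::'k::field_char_0)"
  by (simp add: mfact_def)

lemma mfact_single[simp]: "mfact {#u#} = 1"
  by (simp add: mfact_def)

lemma lookup_ind:
  "LK (ind \<theta> a) m = (if size m \<le> size a then
      1 / of_nat (fact (size m)) * (\<Sum>xs\<in>decomp (size m) a. mcoef a xs * LK (PL \<theta> xs) m) else 0)"
proof -
  have "LK (ind \<theta> a) m = (\<Sum>n\<in>{0..size a}. 1 / of_nat (fact n) *
          (\<Sum>xs\<in>decomp n a. mcoef a xs * LK (PL \<theta> xs) m))"
    by (simp add: ind_def lookup_sum PL_def)
  also have "\<dots> = (\<Sum>n\<in>{0..size a}. if n = size m then 1 / of_nat (fact n) *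
          (\<Sum>xs\<in>decomp n a. mcoef a xs * LK (PL \<theta> xs) m) else 0)"
    by (intro sum.cong refl) (auto simp: decomp_def lookup_PL_other intro!: sum.neutral)
  also have "\<dots> = (if size m \<le> size a then
      1 / of_nat (fact (size m)) * (\<Sum>xs\<in>decomp (size m) a. mcoef a xs * LK (PL \<theta> xs) m) else 0)"
    by (subst sum.delta) auto
  finally show ?thesis .
qed

lemma decomp_0: "decomp 0 a = (if a = {#} then {[]} else {})"
  by (auto simp: decomp_def)

lemma ind_eps: "LK (ind \<theta> a) {#} = eps a"
  by (simp add: lookup_ind decomp_0 eps_def mcoef_def PL_def mfact_def)

lemma ind_pi:
  assumes "\<theta> {#} = 0"
  shows "LK (ind \<theta> a) {#j#} = LK (\<theta> a) j"
proof (cases "a = {#}")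
  case True
  then show ?thesis using assms by (simp add: lookup_ind)
next
  case False
  then have "1 \<le> size a" by (simp add: Suc_le_eq nonempty_has_size)
  moreover have "decomp (Suc 0) a = {[a]}" by (auto simp: decomp_def length_Suc_conv)
  ultimately show ?thesis
    by (simp add: lookup_ind mcoef_def PL_def mfact_nz)
qed

lemma indL_eps: "LK (indL \<psi> p) {#} = LK p {#}"
  by (simp add: indL_def lookup_linext ind_eps sum_eps)

lemma indL_pi: assumes "\<psi> {#} = 0" shows "linext piV (indL \<psi> p) = linext \<psi> p"
proof (rule poly_mapping_eqI)
  fix k
  have "LK (linext piV (indL \<psi> p)) k = LK (indL \<psi> p) {#k#}" by (rule lookup_pi)
  also have "\<dots> = LK (linext \<psi> p) k" using assms by (simp add: indL_def lookup_linext ind_pi)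
  finally show "LK (linext piV (indL \<psi> p)) k = LK (linext \<psi> p) k" .
qed

text \<open>TT theta a is the product of theta(x_u) over the letters u of a; it is the
  degree-|a| component of theta'(x^a).\<close>
definition TT :: "('a multiset \<Rightarrow> ('w \<Rightarrow>\<^sub>0 'k::field_char_0)) \<Rightarrow> 'a multiset \<Rightarrow> ('w multiset \<Rightarrow>\<^sub>0 'k)" where
  "TT \<theta> a = prod_mset (image_mset (\<lambda>u. lin (\<theta> {#u#})) a)"

lemma sum_list_singles: "sum_list (map (\<lambda>u. {#u#}) us) = mset us"
  by (induction us) auto

lemma PL_singles: "PL \<theta> (map (\<lambda>u. {#u#}) us) = TT \<theta> (mset us)"
  by (simp add: PL_def TT_def prod_mset_prod_list[symmetric] mset_map image_mset.compositionality o_def)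

lemma lookup_TT_other: "size m \<noteq> size a \<Longrightarrow> LK (TT \<theta> a) m = 0"
proof -
  assume m: "size m \<noteq> size a"
  obtain us where us: "mset us = a" using ex_mset by blast
  then have "length us = size a" by (metis size_mset)
  then show ?thesis using m us lookup_PL_other[of m "map (\<lambda>u. {#u#}) us" \<theta>] by (simp add: PL_singles)
qed

lemma size_sum_list: "size (sum_list (xs :: 'a multiset list)) = sum_list (map size xs)"
  by (induction xs) (auto simp: size_union)

lemma sum_list_ge_length: "(\<And>x. x \<in> set xs \<Longrightarrow> 1 \<le> f x) \<Longrightarrow> length xs \<le> sum_list (map f xs)"
  by (induction xs) force+

lemma all_one:
  assumes "\<And>x. x \<in> set xs \<Longrightarrow> (1::nat) \<le> f x" "sum_list (map f xs) = length xs"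
  shows "\<forall>x\<in>set xs. f x = 1"
  using assms
proof (induction xs)
  case (Cons y ys)
  have "length ys \<le> sum_list (map f ys)" using Cons.prems(1) by (intro sum_list_ge_length) auto
  moreover have "1 \<le> f y" using Cons.prems(1) by auto
  ultimately have "f y = 1" "sum_list (map f ys) = length ys" using Cons.prems(2) by auto
  with Cons show ?case by auto
qed simp

lemma decomp_top:
  assumes "xs \<in> decomp (size a) a" "{#} \<notin> set xs"
  shows "xs \<in> (map (\<lambda>u. {#u#})) ` permutations_of_multiset a"
proof -
  have len: "length xs = size a" and sum: "sum_list xs = a" using assms(1) by (auto simp: decomp_def)
  have "\<forall>x\<in>set xs. size x = 1"
  proof (rule all_one)
    show "1 \<le> size x" if "x \<in> set xs" for x
      using assms(2) that by (cases x) auto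
    show "sum_list (map size xs) = length xs" using len sum by (simp add: size_sum_list[symmetric])
  qed
  then have "\<forall>x\<in>set xs. \<exists>u. x = {#u#}" using size_1_singleton_mset by blast
  then obtain us where us: "xs = map (\<lambda>u. {#u#}) us" using ex_map_conv by metis
  then have "mset us = a" using sum by (simp add: sum_list_singles)
  then show ?thesis using us by (auto simp: permutations_of_multiset_def)
qed

lemma singles_in_decomp: "us \<in> permutations_of_multiset a \<Longrightarrow> map (\<lambda>u. {#u#}) us \<in> decomp (size a) a"
  by (auto simp: permutations_of_multiset_def decomp_def sum_list_singles)

lemma mfact_of_nat: "mfact a = of_nat (\<Prod>x\<in>set_mset a. fact (count a x))"
  by (simp add: mfact_def of_nat_prod)

text \<open>In top degree only orderings of the letters contribute; there are |a|!/a! of them,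
  each with coefficient a!, cancelling the factor 1/|a|!.\<close>
lemma ind_top:
  fixes \<theta> :: "'a multiset \<Rightarrow> ('w \<Rightarrow>\<^sub>0 'k::field_char_0)"
  assumes th0: "\<theta> {#} = 0" and sz: "size m = size a"
  shows "LK (ind \<theta> a) m = LK (TT \<theta> a) m"
proof -
  let ?n = "size a"
  let ?D = "decomp ?n a"
  let ?sg = "map (\<lambda>u. {#u#})"
  let ?P = "permutations_of_multiset a"
  let ?g = "\<lambda>xs. mcoef a xs * LK (PL \<theta> xs) m"
  have "LK (ind \<theta> a) m = 1 / of_nat (fact ?n) * (\<Sum>xs\<in>?D. ?g xs)"
    using sz by (simp add: lookup_ind)
  also have "(\<Sum>xs\<in>?D. ?g xs) = (\<Sum>xs\<in>?sg ` ?P. ?g xs)"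
  proof (rule sum.mono_neutral_right)
    show "finite ?D" by (rule finite_decomp)
    show "?sg ` ?P \<subseteq> ?D" using singles_in_decomp by blast
    show "\<forall>xs\<in>?D - ?sg ` ?P. ?g xs = 0"
      using decomp_top PL_zero[of "{#}" _ \<theta>] th0 by fastforce
  qed
  also have "\<dots> = (\<Sum>us\<in>?P. ?g (?sg us))"
  proof (rule sum.reindex_cong[where l="?sg"])
    have "inj (\<lambda>u. {#u#})" by (auto intro: injI)
    then show "inj_on ?sg ?P" by (auto simp: inj_on_def inj_map_eq_map)
  qed auto
  also have "\<dots> = (\<Sum>us\<in>?P. mfact a * LK (TT \<theta> a) m)"
  proof (intro sum.cong refl)
    fix us assume "us \<in> ?P"
    then have "mset us = a" by (simp add: permutations_of_multiset_def)
    moreover have "prod_list (map mfact (?sg us)) = (1::'k)"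
      by (induction us) auto
    ultimately show "?g (?sg us) = mfact a * LK (TT \<theta> a) m"
      by (simp add: mcoef_def PL_singles)
  qed
  also have "\<dots> = of_nat (card ?P) * mfact a * LK (TT \<theta> a) m"
    by simp
  also have "of_nat (card ?P) * mfact a = (of_nat (fact ?n) :: 'k)"
    unfolding mfact_of_nat of_nat_mult[symmetric] card_permutations_of_multiset_aux by simp
  finally show ?thesis by simp
qed

lemma ind_lin:
  fixes \<theta> :: "'a multiset \<Rightarrow> ('w \<Rightarrow>\<^sub>0 'k::field_char_0)"
  assumes vanish: "\<And>x. x \<subseteq># a \<Longrightarrow> size x \<noteq> 1 \<Longrightarrow> \<theta> x = 0"
  shows "ind \<theta> a = TT \<theta> a"
proof (rule poly_mapping_eqI)
  fix m :: "'w multiset"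
  have th0: "\<theta> {#} = 0" using vanish by simp
  consider "size m = size a" | "size m > size a" | "size m < size a" by linarith
  then show "LK (ind \<theta> a) m = LK (TT \<theta> a) m"
  proof cases
    case 1 then show ?thesis using ind_top[of \<theta> m a] th0 by simp
  next
    case 2 then show ?thesis by (simp add: lookup_ind lookup_TT_other)
  next
    case 3
    have "PL \<theta> xs = 0" if xs: "xs \<in> decomp (size m) a" for xs
    proof (rule ccontr)
      assume nz: "PL \<theta> xs \<noteq> 0"
      have "\<forall>x\<in>set xs. size x = 1"
      proof
        fix x assume x: "x \<in> set xs"
        have "x \<subseteq># a" using xs x by (auto simp: decomp_def in_set_sub_sum_list)
        then show "size x = 1" using nz PL_zero[OF x] vanish by blast
      qed
      then have "sum_list (map size xs) = length xs" by (induction xs) auto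
      then show False using xs 3 by (simp add: decomp_def size_sum_list[symmetric])
    qed
    then show ?thesis using 3 by (simp add: lookup_ind lookup_TT_other)
  qed
qed

lemma TT_single: "(\<And>u. u \<in># a \<Longrightarrow> \<theta> {#u#} = SG (f u) 1) \<Longrightarrow> TT \<theta> a = SG (image_mset f a) 1"
  by (induction a) (simp_all add: TT_def mult_single)

section \<open>The algebra k[F]\<close>

lemma filter_all: "(\<And>y. y \<in># x \<Longrightarrow> P y) \<Longrightarrow> filter_mset P x = x"
  by (induction x) auto

lemma sub_Inl: "x \<subseteq># image_mset Inl a \<Longrightarrow> y \<in># x \<Longrightarrow> isl y"
  by (drule (1) mset_subset_eqD) auto

lemma sub_Inr: "x \<subseteq># image_mset Inr a \<Longrightarrow> y \<in># x \<Longrightarrow> \<not> isl y"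
  by (drule (1) mset_subset_eqD) auto

text \<open>Unitality of F makes 1 a right unit of k[F]: on x^a (x) 1 the formal map F vanishes
  outside degree one, so F'(x^a (x) 1) is the top-degree product x^a.\<close>
lemma ind_unit_right:
  fixes F :: "'u multiset \<Rightarrow> 'u multiset \<Rightarrow> ('u \<Rightarrow>\<^sub>0 'k::field_char_0)"
  assumes "unital_fm F"
  shows "ind (tensF F) (tmono a {#}) = SG a 1"
proof -
  have "ind (tensF F) (image_mset Inl a) = TT (tensF F) (image_mset Inl a)"
  proof (rule ind_lin)
    fix x :: "('u + 'u) multiset" assume x: "x \<subseteq># image_mset Inl a" and s: "size x \<noteq> 1"
    have f1: "filter_mset isl x = x" using sub_Inl[OF x] by (rule filter_all)
    have f2: "filter_mset (\<lambda>y. \<not> isl y) x = {#}" using sub_Inl[OF x] by simp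
    have "tensF F x = piV (image_mset projl x)"
      using assms unfolding tensF_def f1 f2 by (simp add: unital_fm_def)
    then show "tensF F x = 0" using s by (simp add: piV_def)
  qed
  also have "\<dots> = SG (image_mset projl (image_mset (Inl :: 'u \<Rightarrow> 'u + 'u) a)) 1"
    by (rule TT_single[where f=projl]) (use assms in \<open>auto simp: tensF_def unital_fm_def piV_def\<close>)
  finally show ?thesis by (simp add: tmono_def image_mset.compositionality o_def)
qed

lemma ind_unit_left:
  fixes F :: "'u multiset \<Rightarrow> 'u multiset \<Rightarrow> ('u \<Rightarrow>\<^sub>0 'k::field_char_0)"
  assumes "unital_fm F"
  shows "ind (tensF F) (tmono {#} b) = SG b 1"
proof -
  have "ind (tensF F) (image_mset Inr b) = TT (tensF F) (image_mset Inr b)"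
  proof (rule ind_lin)
    fix x :: "('u + 'u) multiset" assume x: "x \<subseteq># image_mset Inr b" and s: "size x \<noteq> 1"
    have f1: "filter_mset (\<lambda>y. \<not> isl y) x = x" using sub_Inr[OF x] by (rule filter_all)
    have f2: "filter_mset isl x = {#}" using sub_Inr[OF x] by auto
    have "tensF F x = piV (image_mset projr x)"
      using assms unfolding tensF_def f1 f2 by (simp add: unital_fm_def)
    then show "tensF F x = 0" using s by (simp add: piV_def)
  qed
  also have "\<dots> = SG (image_mset projr (image_mset (Inr :: 'u \<Rightarrow> 'u + 'u) b)) 1"
    by (rule TT_single[where f=projr]) (use assms in \<open>auto simp: tensF_def unital_fm_def piV_def\<close>)
  finally show ?thesis by (simp add: tmono_def image_mset.compositionality o_def)
qed

lemma mulF_linext: "mulF F p q = linext (\<lambda>a. linext (\<lambda>b. ind (tensF F) (tmono a b)) q) p"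
  unfolding mulF_def linext_def by (simp add: sc_sum mult.commute)

lemma mulF_swap: "mulF F p q = linext (\<lambda>b. linext (\<lambda>a. ind (tensF F) (tmono a b)) p) q"
  unfolding mulF_linext by (rule linext_swap)

lemma lmap_mulF1: "lmap (\<lambda>p. mulF F p q)"
  unfolding mulF_linext by (rule lmap_linext)

lemma lmap_mulF2: "lmap (\<lambda>q. mulF F p q)"
  unfolding mulF_linext by (rule lmap_second)

lemma mulF_one_right:
  assumes "unital_fm F" shows "mulF F p 1 = p"
proof -
  have "mulF F p 1 = linext (\<lambda>a. ind (tensF F) (tmono a {#})) p"
    by (simp add: mulF_linext flip: single_one)
  also have "\<dots> = p" using assms by (simp add: ind_unit_right linext_id)
  finally show ?thesis .
qed

lemma mulF_one_left:
  assumes "unital_fm F" shows "mulF F 1 q = q"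
proof -
  have "mulF F 1 q = linext (\<lambda>b. ind (tensF F) (tmono {#} b)) q"
    by (simp add: mulF_swap flip: single_one)
  also have "\<dots> = q" using assms by (simp add: ind_unit_left linext_id)
  finally show ?thesis .
qed

lemma eps_tmono: "eps (tmono a b) = eps a * eps b"
  by (simp add: eps_def tmono_def)

lemma mulF_eps: "LK (mulF F p q) {#} = LK p {#} * LK q {#}"
proof -
  have "LK (mulF F p q) {#} = (\<Sum>a\<in>KS p. LK p a * (\<Sum>b\<in>KS q. LK q b * (eps a * eps b)))"
    by (simp add: mulF_linext lookup_linext ind_eps eps_tmono)
  also have "\<dots> = (\<Sum>a\<in>KS p. LK p a * eps a * (\<Sum>b\<in>KS q. LK q b * eps b))"
    by (intro sum.cong refl) (simp add: sum_distrib_left algebra_simps)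
  also have "\<dots> = LK p {#} * LK q {#}"
    by (simp add: sum_distrib_right[symmetric] sum_eps)
  finally show ?thesis .
qed

lemma bilin_Gmul:
  "bilin (Gmul c) P Q = sc (LK Q {#}) (linext piV P) + sc (LK P {#}) (linext piV Q)
     + prodA c (linext piV P) (linext piV Q)"
proof -
  have inner: "linext (Gmul c m) Q = sc (LK Q {#}) (piV m) + sc (eps m) (linext piV Q)
     + prodA c (piV m) (linext piV Q)" for m
  proof -
    have "linext (Gmul c m) Q = linext (\<lambda>m'. sc (eps m') (piV m)) Q
        + linext (\<lambda>m'. sc (eps m) (piV m')) Q + linext (\<lambda>m'. prodA c (piV m) (piV m')) Q"
      by (simp add: Gmul_def[abs_def] linext_fun_add)
    also have "linext (\<lambda>m'. sc (eps m') (piV m)) Q = sc (LK Q {#}) (piV m)"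
      by (simp add: linext_fun_sc sum_eps)
    also have "linext (\<lambda>m'. sc (eps m) (piV m')) Q = sc (eps m) (linext piV Q)"
      by (rule linext_fun_sc2)
    also have "linext (\<lambda>m'. prodA c (piV m) (piV m')) Q = prodA c (piV m) (linext piV Q)"
      by (rule lmap_linext_comp[OF lmap_prodA2, symmetric])
    finally show ?thesis .
  qed
  have "bilin (Gmul c) P Q = linext (\<lambda>m. sc (LK Q {#}) (piV m)) P
     + linext (\<lambda>m. sc (eps m) (linext piV Q)) P + linext (\<lambda>m. prodA c (piV m) (linext piV Q)) P"
    by (simp add: bilin_linext inner linext_fun_add)
  also have "linext (\<lambda>m. sc (LK Q {#}) (piV m)) P = sc (LK Q {#}) (linext piV P)"
    by (rule linext_fun_sc2)
  also have "linext (\<lambda>m. sc (eps m) (linext piV Q)) P = sc (LK P {#}) (linext piV Q)"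
    by (simp add: linext_fun_sc sum_eps)
  also have "linext (\<lambda>m. prodA c (piV m) (linext piV Q)) P = prodA c (linext piV P) (linext piV Q)"
    by (rule lmap_linext_comp[OF lmap_prodA1, symmetric])
  finally show ?thesis .
qed

lemma hom_Gmul_product_rule:
  assumes "fm_hom F (Gmul c) \<psi>"
  shows "linext \<psi> (mulF F p q) = sc (LK q {#}) (linext \<psi> p) + sc (LK p {#}) (linext \<psi> q)
     + prodA c (linext \<psi> p) (linext \<psi> q)"
proof -
  have "\<psi> {#} = 0" and "linext \<psi> (mulF F p q) = bilin (Gmul c) (indL \<psi> p) (indL \<psi> q)"
    using assms by (auto simp: fm_hom_def)
  then show ?thesis by (simp add: bilin_Gmul indL_eps indL_pi)
qed

section \<open>Primitive elements of k[V] lie in V\<close>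

lemma filter_isl_Inl[simp]: "filter_mset isl (image_mset Inl b) = image_mset Inl b"
  by (induction b) auto
lemma filter_isl_Inr[simp]: "filter_mset isl (image_mset Inr b) = {#}"
  by (induction b) auto
lemma filter_nisl_Inl[simp]: "filter_mset (\<lambda>x. \<not> isl x) (image_mset Inl b) = {#}"
  by (induction b) auto
lemma filter_nisl_Inr[simp]: "filter_mset (\<lambda>x. \<not> isl x) (image_mset Inr b) = image_mset Inr b"
  by (induction b) auto

lemma tmono_eq_iff: "tmono b c = tmono b' c' \<longleftrightarrow> b = b' \<and> c = c'"
proof
  assume eq: "tmono b c = tmono b' c'"
  have "b = image_mset projl (filter_mset isl (tmono b c))"
    "c = image_mset projr (filter_mset (\<lambda>x. \<not> isl x) (tmono b c))" for b c :: "'a multiset"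
    by (simp_all add: tmono_def image_mset.compositionality o_def)
  then show "b = b' \<and> c = c'" using eq by metis
qed simp

lemma lookup_copr: "LK (copr p) (tmono b c) = LK p (b + c) * mcoef (b + c) [b, c]"
proof -
  have inner: "(\<Sum>b'\<in>{b'. b' \<subseteq># a}. LK (SG (tmono b' (a - b')) (mcoef a [b', a - b'])) (tmono b c))
      = (if a = b + c then mcoef a [b, c] else (0::'a))" for a
  proof -
    have "(\<Sum>b'\<in>{b'. b' \<subseteq># a}. LK (SG (tmono b' (a - b')) (mcoef a [b', a - b'])) (tmono b c))
       = (\<Sum>b'\<in>{b'. b' \<subseteq># a}. if tmono b' (a - b') = tmono b c then mcoef a [b', a - b'] else 0)"
      by (simp add: lookup_single when_def)
    also have "\<dots> = (\<Sum>b'\<in>{b'. b' \<subseteq># a}. if b' = b then (if a - b = c then mcoef a [b, c] else 0) else 0)"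
      by (intro sum.cong refl) (auto simp: tmono_eq_iff)
    also have "\<dots> = (if b \<in> {b'. b' \<subseteq># a} then (if a - b = c then mcoef a [b, c] else 0) else 0)"
      by (rule sum.delta[OF finite_submsets])
    also have "\<dots> = (if a = b + c then mcoef a [b, c] else 0)"
      by (auto simp: subset_mset.add_diff_inverse)
    finally show ?thesis .
  qed
  have "LK (copr p) (tmono b c) = (\<Sum>a\<in>KS p. LK p a * (if a = b + c then mcoef a [b, c] else 0))"
    by (simp add: copr_def lookup_sum inner)
  also have "\<dots> = (\<Sum>a\<in>KS p. if a = b + c then LK p (b + c) * mcoef (b + c) [b, c] else 0)"
    by (intro sum.cong refl) auto
  also have "\<dots> = LK p (b + c) * mcoef (b + c) [b, c]"
    by (simp add: in_keys_iff)
  finally show ?thesis .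
qed

lemma lookup_tensor_1: "LK (tensor p 1) (tmono b c) = (if c = {#} then LK p b else 0)"
proof -
  have "LK (tensor p 1) (tmono b c) = (\<Sum>a\<in>KS p. if tmono a {#} = tmono b c then LK p a else 0)"
    by (simp add: tensor_def lookup_sum lookup_single when_def)
  also have "\<dots> = (\<Sum>a\<in>KS p. if a = b then (if c = {#} then LK p b else 0) else 0)"
    by (intro sum.cong refl) (auto simp: tmono_eq_iff)
  also have "\<dots> = (if c = {#} then LK p b else 0)"
    by (simp add: in_keys_iff)
  finally show ?thesis .
qed

lemma lookup_tensor_2: "LK (tensor 1 p) (tmono b c) = (if b = {#} then LK p c else 0)"
proof -
  have "LK (tensor 1 p) (tmono b c) = (\<Sum>a\<in>KS p. if tmono {#} a = tmono b c then LK p a else 0)"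
    by (simp add: tensor_def lookup_sum lookup_single when_def)
  also have "\<dots> = (\<Sum>a\<in>KS p. if a = c then (if b = {#} then LK p c else 0) else 0)"
    by (intro sum.cong refl) (auto simp: tmono_eq_iff)
  also have "\<dots> = (if b = {#} then LK p c else 0)"
    by (simp add: in_keys_iff)
  finally show ?thesis .
qed

text \<open>Comparing coefficients of x^b (x) x^c in Delta(p) = p (x) 1 + 1 (x) p, and using that
  the multinomial coefficients are nonzero in characteristic 0, a primitive element has
  no components outside degree one.\<close>
lemma Prim_sub: "(Prim :: ('u multiset \<Rightarrow>\<^sub>0 'k::field_char_0) set) \<subseteq> Vsub"
proof
  fix p :: "'u multiset \<Rightarrow>\<^sub>0 'k" assume "p \<in> Prim"
  then have pr: "copr p = tensor p 1 + tensor 1 p" by (simp add: Prim_def)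
  have key: "LK p (b + c) * mcoef (b + c) [b, c] =
     (if c = {#} then LK p b else 0) + (if b = {#} then LK p c else 0)" for b c
    using arg_cong[OF pr, of "\<lambda>x. LK x (tmono b c)"]
    by (simp add: lookup_copr lookup_add lookup_tensor_1 lookup_tensor_2)
  have z: "LK p m = 0" if "size m \<noteq> 1" for m
  proof (cases "m = {#}")
    case True
    then show ?thesis using key[of "{#}" "{#}"] by (simp add: mcoef_def mfact_def)
  next
    case False
    then obtain u where u: "u \<in># m" by (meson multiset_nonemptyE)
    define c where "c = m - {#u#}"
    have m: "m = {#u#} + c" using u by (simp add: c_def)
    have "c \<noteq> {#}" using that m by auto
    then have "LK p m * mcoef m [{#u#}, c] = 0" using key[of "{#u#}" c] m by simp
    then show ?thesis using mfact_nz by (auto simp: mcoef_def)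
  qed
  have "p = lin (linext piV p)"
  proof (rule poly_mapping_eqI)
    fix m
    show "LK p m = LK (lin (linext piV p)) m"
    proof (cases "size m = 1")
      case True
      then obtain j where "m = {#j#}" using size_1_singleton_mset by blast
      then show ?thesis by (simp add: lookup_pi)
    next
      case False
      then show ?thesis using z by (simp add: lookup_lin_other)
    qed
  qed
  then show "p \<in> Vsub" by (auto simp: Vsub_def)
qed

section \<open>Complements and bases modulo a subspace\<close>

definition subsp :: "('a \<Rightarrow>\<^sub>0 'k::field) set \<Rightarrow> bool" where
  "subsp I \<longleftrightarrow> 0 \<in> I \<and> (\<forall>x\<in>I. \<forall>y\<in>I. x + y \<in> I) \<and> (\<forall>c. \<forall>x\<in>I. sc c x \<in> I)"

lemma subsp_0: "subsp I \<Longrightarrow> 0 \<in> I" by (simp add: subsp_def)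
lemma subsp_add: "subsp I \<Longrightarrow> x \<in> I \<Longrightarrow> y \<in> I \<Longrightarrow> x + y \<in> I" by (simp add: subsp_def)
lemma subsp_sc: "subsp I \<Longrightarrow> x \<in> I \<Longrightarrow> sc c x \<in> I" by (simp add: subsp_def)
lemma subsp_diff: "subsp I \<Longrightarrow> x \<in> I \<Longrightarrow> y \<in> I \<Longrightarrow> x - y \<in> I"
  using subsp_add[of I x "sc (- 1) y"] subsp_sc[of I y "- 1"] by (simp add: sc_neg_left)
lemma subsp_sum: "subsp I \<Longrightarrow> (\<And>a. a \<in> A \<Longrightarrow> f a \<in> I) \<Longrightarrow> sum f A \<in> I"
  by (induction A rule: infinite_finite_induct) (auto simp: subsp_0 subsp_add)

lemma twosided_subsp: "twosided_ideal F I \<Longrightarrow> subsp I"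
  by (simp add: twosided_ideal_def subsp_def)

definition lcomb :: "'k list \<Rightarrow> ('a \<Rightarrow>\<^sub>0 'k::comm_ring_1) list \<Rightarrow> ('a \<Rightarrow>\<^sub>0 'k)" where
  "lcomb cs bs = (\<Sum>j<length bs. sc (cs ! j) (bs ! j))"

lemma finite_codim_lcomb:
  "finite_codim I \<longleftrightarrow> (\<exists>bs. \<forall>p. \<exists>cs. length cs = length bs \<and> p - lcomb cs bs \<in> I)"
  by (simp add: finite_codim_def lcomb_def)

lemma lcomb_snoc:
  assumes "length cs = length bs"
  shows "lcomb (cs @ [\<alpha>]) (bs @ [r]) = lcomb cs bs + sc \<alpha> r"
proof -
  have "(\<Sum>j<length bs. sc ((cs @ [\<alpha>]) ! j) ((bs @ [r]) ! j)) = (\<Sum>j<length bs. sc (cs ! j) (bs ! j))"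
    using assms by (intro sum.cong refl) (simp add: nth_append)
  then show ?thesis using assms by (simp add: lcomb_def nth_append)
qed

definition spans_mod_kernels :: "(('a \<Rightarrow>\<^sub>0 'k::field) \<Rightarrow> 'k) list \<Rightarrow> ('a \<Rightarrow>\<^sub>0 'k) list \<Rightarrow> bool" where
  "spans_mod_kernels fs bs \<longleftrightarrow> (\<forall>p. \<exists>cs. length cs = length bs \<and> (\<forall>f\<in>set fs. f (p - lcomb cs bs) = 0))"

text \<open>Adding one functional needs at most one further spanning vector: any vector on
  which the old functionals vanish but the new one does not.\<close>
lemma spans_mod_kernels_Cons:
  assumes lf: "lfun f" and lfs: "\<forall>g\<in>set fs. lfun g" and bs: "spans_mod_kernels fs bs"
  shows "\<exists>bs'. spans_mod_kernels (f # fs) bs'"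
proof (cases "\<exists>r. (\<forall>g\<in>set fs. g r = 0) \<and> f r \<noteq> 0")
  case True
  then obtain r where r: "\<forall>g\<in>set fs. g r = 0" "f r \<noteq> 0" by blast
  have "spans_mod_kernels (f # fs) (bs @ [r])"
    unfolding spans_mod_kernels_def
  proof
    fix p
    obtain cs where cs: "length cs = length bs" "\<forall>g\<in>set fs. g (p - lcomb cs bs) = 0"
      using bs by (auto simp: spans_mod_kernels_def)
    define q where "q = p - lcomb cs bs"
    define \<alpha> where "\<alpha> = f q / f r"
    have "g (q - sc \<alpha> r) = 0" if "g \<in> set (f # fs)" for g
    proof (cases "g = f")
      case True then show ?thesis using lf r(2) by (simp add: lfun_diff lfun_sc \<alpha>_def)
    next
      case False
      then have g: "g \<in> set fs" using that by simp
      then have "lfun g" using lfs by blast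
      moreover have "g q = 0" "g r = 0" using g cs(2) r(1) by (auto simp: q_def)
      ultimately show ?thesis by (simp add: lfun_diff lfun_sc)
    qed
    then show "\<exists>cs'. length cs' = length (bs @ [r]) \<and>
        (\<forall>g\<in>set (f # fs). g (p - lcomb cs' (bs @ [r])) = 0)"
      using cs(1) by (intro exI[of _ "cs @ [\<alpha>]"]) (simp add: lcomb_snoc q_def diff_diff_eq)
  qed
  then show ?thesis by blast
next
  case False
  have "spans_mod_kernels (f # fs) bs"
    unfolding spans_mod_kernels_def
  proof
    fix p
    obtain cs where cs: "length cs = length bs" "\<forall>g\<in>set fs. g (p - lcomb cs bs) = 0"
      using bs by (auto simp: spans_mod_kernels_def)
    then have "f (p - lcomb cs bs) = 0" using False by blast
    then show "\<exists>cs. length cs = length bs \<and> (\<forall>g\<in>set (f # fs). g (p - lcomb cs bs) = 0)"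
      using cs by auto
  qed
  then show ?thesis by blast
qed

lemma functionals_span: "\<forall>f\<in>set fs. lfun f \<Longrightarrow> \<exists>bs. spans_mod_kernels fs bs"
proof (induction fs)
  case Nil
  have "spans_mod_kernels [] []" by (simp add: spans_mod_kernels_def)
  then show ?case by blast
next
  case (Cons f fs)
  then obtain bs where "spans_mod_kernels fs bs" by auto
  then show ?case using spans_mod_kernels_Cons Cons.prems by auto
qed

lemma common_kernel_finite_codim:
  assumes "\<forall>f\<in>set fs. lfun f" and "\<And>r. \<forall>f\<in>set fs. f r = 0 \<Longrightarrow> r \<in> I"
  shows "finite_codim I"
proof -
  obtain bs where bs: "spans_mod_kernels fs bs" using functionals_span[OF assms(1)] by blast
  have "\<exists>cs. length cs = length bs \<and> p - lcomb cs bs \<in> I" for p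
    using bs assms(2) unfolding spans_mod_kernels_def by blast
  then show ?thesis unfolding finite_codim_lcomb by blast
qed

definition spanT :: "('a \<Rightarrow>\<^sub>0 'k::field) set \<Rightarrow> ('a \<Rightarrow>\<^sub>0 'k) set \<Rightarrow> bool" where
  "spanT I T \<longleftrightarrow> (\<forall>p. \<exists>c. p - (\<Sum>v\<in>T. sc (c v) v) \<in> I)"

definition indep_mod :: "('a \<Rightarrow>\<^sub>0 'k::field) set \<Rightarrow> ('a \<Rightarrow>\<^sub>0 'k) set \<Rightarrow> bool" where
  "indep_mod I T \<longleftrightarrow> (\<forall>d. (\<Sum>v\<in>T. sc (d v) v) \<in> I \<longrightarrow> (\<forall>v\<in>T. d v = 0))"

lemma spanT_mono:
  assumes h: "spanT I T" "T \<subseteq> T'" "finite T'"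
  shows "spanT I T'"
  unfolding spanT_def
proof
  fix p
  obtain c where c: "p - (\<Sum>v\<in>T. sc (c v) v) \<in> I" using h(1) spanT_def by blast
  have "(\<Sum>v\<in>T'. sc (if v \<in> T then c v else 0) v) = (\<Sum>v\<in>T. sc (c v) v)"
    using h(2,3) by (intro sum.mono_neutral_cong_right) auto
  then show "\<exists>c. p - (\<Sum>v\<in>T'. sc (c v) v) \<in> I"
    using c by (intro exI[of _ "\<lambda>v. if v \<in> T then c v else 0"]) simp
qed

lemma spanT_drop:
  assumes sub: "subsp I" and fT: "finite T" and sp: "spanT I T" and d: "(\<Sum>v\<in>T. sc (d v) v) \<in> I"
    and v0: "v0 \<in> T" "d v0 \<noteq> 0"
  shows "spanT I (T - {v0})"
  unfolding spanT_def
proof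
  fix p
  obtain c where c: "p - (\<Sum>v\<in>T. sc (c v) v) \<in> I" using sp spanT_def by blast
  define k where "k = c v0 / d v0"
  define c' where "c' v = c v - k * d v" for v
  have "p - (\<Sum>v\<in>T. sc (c' v) v) = (p - (\<Sum>v\<in>T. sc (c v) v)) + sc k (\<Sum>v\<in>T. sc (d v) v)"
    by (simp add: c'_def sc_diff_left sum_subtractf sc_sum)
  also have "\<dots> \<in> I" using c d sub by (intro subsp_add subsp_sc) auto
  finally have in1: "p - (\<Sum>v\<in>T. sc (c' v) v) \<in> I" .
  have "c' v0 = 0" using v0 by (simp add: c'_def k_def)
  then have "(\<Sum>v\<in>T. sc (c' v) v) = (\<Sum>v\<in>T - {v0}. sc (c' v) v)"
    using fT v0 by (simp add: sum.remove)
  then show "\<exists>c. p - (\<Sum>v\<in>T - {v0}. sc (c v) v) \<in> I" using in1 by metis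
qed

lemma lcomb_set: "lcomb cs bs = (\<Sum>v\<in>set bs. sc (\<Sum>j\<in>{j\<in>{..<length bs}. bs!j = v}. cs!j) v)"
proof -
  have "(\<Sum>v\<in>set bs. \<Sum>j\<in>{j\<in>{..<length bs}. bs!j = v}. sc (cs!j) (bs!j)) = lcomb cs bs"
    unfolding lcomb_def by (rule sum.group) auto
  moreover have "(\<Sum>j\<in>{j\<in>{..<length bs}. bs!j = v}. sc (cs!j) (bs!j))
      = sc (\<Sum>j\<in>{j\<in>{..<length bs}. bs!j = v}. cs!j) v" for v
    by (simp add: sum_sc_left)
  ultimately show ?thesis by simp
qed

lemma codim_spanT:
  assumes "finite_codim I" shows "\<exists>B. finite B \<and> spanT I B"
proof -
  obtain bs where bs: "\<forall>p. \<exists>cs. length cs = length bs \<and> p - lcomb cs bs \<in> I"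
    using assms by (auto simp: finite_codim_lcomb)
  have "spanT I (set bs)"
    unfolding spanT_def
  proof
    fix p
    obtain cs where "p - lcomb cs bs \<in> I" using bs by blast
    then show "\<exists>c. p - (\<Sum>v\<in>set bs. sc (c v) v) \<in> I"
      unfolding lcomb_set by (rule exI[where x="\<lambda>v. \<Sum>j\<in>{j\<in>{..<length bs}. bs!j = v}. cs!j"])
  qed
  then show ?thesis by blast
qed

text \<open>A finite set independent modulo I extends to a finite basis modulo I: take a
  complement S of minimal size; by minimality no vector of X \<union> S can be dropped.\<close>
lemma extend_to_basis_mod:
  assumes sub: "subsp I" and fc: "finite_codim I" and fX: "finite X" and iX: "indep_mod I X"
  shows "\<exists>T. X \<subseteq> T \<and> finite T \<and> spanT I T \<and> indep_mod I T"
proof -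
  obtain B0 where B0: "finite B0" "spanT I B0" using codim_spanT[OF fc] by blast
  define good where "good S \<longleftrightarrow> finite S \<and> spanT I (X \<union> S)" for S
  have "good B0" unfolding good_def using B0 fX by (auto intro: spanT_mono)
  then obtain S where S: "good S" and minimal: "\<And>S'. good S' \<Longrightarrow> card S \<le> card S'"
    using ex_has_least_nat[of good B0 card] by blast
  have fS: "finite S" using S by (simp add: good_def)
  have not_good: "\<not> good (S - {v})" if "v \<in> S" for v
    using minimal[of "S - {v}"] card_Diff1_less[OF fS that] by linarith
  have disj: "X \<inter> S = {}"
  proof (rule ccontr)
    assume "X \<inter> S \<noteq> {}"
    then obtain v where v: "v \<in> X" "v \<in> S" by blast
    then have "X \<union> (S - {v}) = X \<union> S" by auto
    then show False using S not_good[OF v(2)] fS by (simp add: good_def)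
  qed
  define T where "T = X \<union> S"
  have fT: "finite T" and spT: "spanT I T" using fX fS S by (simp_all add: T_def good_def)
  have "indep_mod I T"
    unfolding indep_mod_def
  proof (intro allI impI ballI)
    fix d v assume h: "(\<Sum>v\<in>T. sc (d v) v) \<in> I" and vT: "v \<in> T"
    have dS: "d w = 0" if "w \<in> S" for w
    proof (rule ccontr)
      assume "d w \<noteq> 0"
      then have "spanT I (T - {w})" using spanT_drop[OF sub fT spT h] that by (simp add: T_def)
      moreover have "T - {w} = X \<union> (S - {w})" using disj that by (auto simp: T_def)
      ultimately show False using not_good[OF that] fS by (simp add: good_def)
    qed
    have "(\<Sum>v\<in>T. sc (d v) v) = (\<Sum>v\<in>X. sc (d v) v) + (\<Sum>v\<in>S. sc (d v) v)"
      unfolding T_def using fX fS disj by (rule sum.union_disjoint)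
    then have "(\<Sum>v\<in>X. sc (d v) v) \<in> I" using h dS by simp
    then have "\<forall>v\<in>X. d v = 0" using iX by (simp add: indep_mod_def)
    then show "d v = 0" using dS vT by (auto simp: T_def)
  qed
  then show ?thesis using fT spT by (auto simp: T_def)
qed

lemma expand_units:
  fixes v :: "nat \<Rightarrow>\<^sub>0 'k::comm_ring_1"
  assumes "KS v \<subseteq> {..<N}"
  shows "v = (\<Sum>j<N. sc (LK v j) (SG j 1))"
proof -
  have "v = (\<Sum>j\<in>KS v. SG j (LK v j))" by (rule poly_expansion[symmetric])
  also have "\<dots> = (\<Sum>j<N. SG j (LK v j))"
    using assms by (intro sum.mono_neutral_left) (auto simp: in_keys_iff)
  finally show ?thesis by (simp add: sc_single)
qed

lemma dependent_family:
  fixes r :: "'a \<Rightarrow> (nat \<Rightarrow>\<^sub>0 'k::field)"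
  assumes fX: "finite X" and big: "N < card X" and supp: "\<And>v. v \<in> X \<Longrightarrow> KS (r v) \<subseteq> {..<N}"
  shows "\<exists>d. (\<Sum>v\<in>X. sc (d v) (r v)) = 0 \<and> (\<exists>v\<in>X. d v \<noteq> 0)"
proof (cases "inj_on r X")
  case False
  then obtain u1 u2 where u12: "u1 \<in> X" "u2 \<in> X" "u1 \<noteq> u2" "r u1 = r u2"
    by (auto simp: inj_on_def)
  define d where "d u = (if u = u1 then 1 else if u = u2 then -1 else (0::'k))" for u
  have "(\<Sum>u\<in>X. sc (d u) (r u)) = (\<Sum>u\<in>X. (if u = u1 then r u1 else 0) + (if u = u2 then - r u2 else 0))"
    by (intro sum.cong refl) (auto simp: d_def sc_neg_left u12(3))
  also have "\<dots> = 0" using fX u12 by (simp add: sum.distrib)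
  finally show ?thesis using u12(1) by (intro exI[of _ d]) (auto simp: d_def)
next
  case True
  define B where "B = (\<lambda>j. SG j (1::'k)) ` {..<N}"
  have fB: "finite B" and cB: "card B \<le> N"
    using card_image_le[of "{..<N}" "\<lambda>j. SG j (1::'k)"] by (auto simp: B_def)
  have span: "r ` X \<subseteq> pv.span B"
  proof
    fix w assume "w \<in> r ` X"
    then obtain u where u: "u \<in> X" "w = r u" by blast
    have "(\<Sum>j<N. sc (LK w j) (SG j 1)) \<in> pv.span B"
      by (intro pv.span_sum pv.span_scale pv.span_base) (auto simp: B_def)
    then show "w \<in> pv.span B" using expand_units[OF supp[OF u(1)]] u(2) by simp
  qed
  moreover have "card (r ` X) = card X" using True by (simp add: card_image)
  ultimately have "\<not> pv.independent (r ` X)"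
    using pv.independent_span_bound[OF fB _ span] big cB by auto
  then obtain S u' w0 where S: "S \<subseteq> r ` X" "finite S" "(\<Sum>w\<in>S. sc (u' w) w) = 0"
      "w0 \<in> S" "u' w0 \<noteq> 0"
    unfolding pv.independent_explicit_finite_subsets by blast
  define d where "d u = (if r u \<in> S then u' (r u) else 0)" for u
  have "(\<Sum>u\<in>X. sc (d u) (r u)) = (\<Sum>u\<in>X. if r u \<in> S then sc (u' (r u)) (r u) else 0)"
    by (intro sum.cong refl) (simp add: d_def)
  also have "\<dots> = (\<Sum>u\<in>{u\<in>X. r u \<in> S}. sc (u' (r u)) (r u))"
    using fX by (simp add: sum.inter_filter)
  also have "\<dots> = (\<Sum>w\<in>r ` {u\<in>X. r u \<in> S}. sc (u' w) w)"
    using True by (subst sum.reindex) (auto intro: inj_on_subset)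
  also have "r ` {u\<in>X. r u \<in> S} = S" using S(1) by auto
  finally have "(\<Sum>u\<in>X. sc (d u) (r u)) = 0" using S(3) by simp
  moreover obtain u0 where "u0 \<in> X" "w0 = r u0" using S(1,4) by blast
  ultimately show ?thesis using S(4,5) by (intro exI[of _ d]) (auto simp: d_def)
qed

lemma card_indep_mod_le:
  assumes sub: "subsp I" and bs: "\<forall>p. \<exists>cs. length cs = length bs \<and> p - lcomb cs bs \<in> I"
    and fX: "finite X" and iX: "indep_mod I X"
  shows "card X \<le> length bs"
proof (rule ccontr)
  assume big: "\<not> card X \<le> length bs"
  define N where "N = length bs"
  define cs where "cs v = (SOME cs. length cs = N \<and> v - lcomb cs bs \<in> I)" for v
  have cs: "v - lcomb (cs v) bs \<in> I" for v
    using someI_ex[of "\<lambda>cs. length cs = N \<and> v - lcomb cs bs \<in> I"] bs by (auto simp: cs_def N_def)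
  define r where "r v = (\<Sum>j<N. SG j (cs v ! j))" for v
  have lr: "LK (r v) j = (if j < N then cs v ! j else 0)" for v j
    by (simp add: r_def lookup_sum_single)
  have "KS (r v) \<subseteq> {..<N}" for v by (auto simp: in_keys_iff lr split: if_splits)
  then obtain d v0 where d: "(\<Sum>v\<in>X. sc (d v) (r v)) = 0" and v0: "v0 \<in> X" "d v0 \<noteq> 0"
    using dependent_family[OF fX, of N r] big by (auto simp: N_def)
  have "(\<Sum>v\<in>X. sc (d v) (lcomb (cs v) bs)) = (\<Sum>j<N. sc (\<Sum>v\<in>X. d v * cs v ! j) (bs ! j))"
    unfolding lcomb_def N_def by (simp add: sc_sum sum_sc_left) (rule sum.swap)
  also have "\<dots> = (\<Sum>j<N. sc (LK (\<Sum>v\<in>X. sc (d v) (r v)) j) (bs ! j))"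
    by (intro sum.cong refl) (simp add: lookup_sum lr)
  finally have z: "(\<Sum>v\<in>X. sc (d v) (lcomb (cs v) bs)) = 0" using d by simp
  have "(\<Sum>v\<in>X. sc (d v) (v - lcomb (cs v) bs)) \<in> I"
    using cs by (intro subsp_sum[OF sub] subsp_sc[OF sub])
  then have "(\<Sum>v\<in>X. sc (d v) v) \<in> I" using z by (simp add: sc_diff sum_subtractf)
  then show False using iX v0 by (auto simp: indep_mod_def)
qed

lemma indexed_basis:
  assumes fT: "finite T" and sp: "spanT I T" and ind: "indep_mod I T"
  shows "\<exists>(N::nat) E. bij_betw E {..<N} T \<and> (\<forall>p. \<exists>c. p - (\<Sum>j<N. sc (c j) (E j)) \<in> I) \<and>
    (\<forall>c. (\<Sum>j<N. sc (c j) (E j)) \<in> I \<longrightarrow> (\<forall>j<N. c j = 0))"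
proof -
  obtain L where L: "set L = T" "distinct L" using finite_distinct_list[OF fT] by blast
  define N where "N = length L"
  define E where "E j = L ! j" for j
  have bij: "bij_betw E {..<N} T"
    unfolding E_def N_def using bij_betw_nth[OF L(2) refl L(1)[symmetric]] by simp
  have sums: "(\<Sum>j<N. h (E j)) = (\<Sum>v\<in>T. h v)" for h :: "_ \<Rightarrow> 'a \<Rightarrow>\<^sub>0 'b"
    by (rule sum.reindex_bij_betw[OF bij])
  have span: "\<exists>c. p - (\<Sum>j<N. sc (c j) (E j)) \<in> I" for p
  proof -
    obtain c where "p - (\<Sum>v\<in>T. sc (c v) v) \<in> I" using sp by (auto simp: spanT_def)
    then show ?thesis using sums[of "\<lambda>v. sc (c v) v"] by (intro exI[of _ "\<lambda>j. c (E j)"]) simp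
  qed
  define pos where "pos v = inv_into {..<N} E v" for v
  have pos: "pos (E j) = j" if "j < N" for j
    using bij that by (simp add: pos_def bij_betw_def inv_into_f_f)
  have indep: "c j = 0" if h: "(\<Sum>j<N. sc (c j) (E j)) \<in> I" and j: "j < N" for c j
  proof -
    have "(\<Sum>v\<in>T. sc (c (pos v)) v) = (\<Sum>j<N. sc (c j) (E j))"
      using sums[of "\<lambda>v. sc (c (pos v)) v"] pos by simp
    then have "(\<Sum>v\<in>T. sc (c (pos v)) v) \<in> I" using h by simp
    moreover have "E j \<in> T" using bij j by (auto simp: bij_betw_def)
    ultimately have "c (pos (E j)) = 0"
      using ind[unfolded indep_mod_def, rule_format, of "\<lambda>v. c (pos v)"] by simp
    then show ?thesis using pos j by simp
  qed
  have "\<forall>p. \<exists>c. p - (\<Sum>j<N. sc (c j) (E j)) \<in> I" using span by blast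
  moreover have "\<forall>c. (\<Sum>j<N. sc (c j) (E j)) \<in> I \<longrightarrow> (\<forall>j<N. c j = 0)" using indep by blast
  ultimately show ?thesis using bij by blast
qed

section \<open>Linear formal multiplications have an ideal as in the theorem\<close>

lemma prodA_zero1[simp]: "prodA c 0 v = 0"
  by (simp add: prodA_def)

lemma prodA_zero2[simp]: "prodA c u 0 = 0"
  by (simp add: prodA_def)

definition hom_kernel :: "('u multiset \<Rightarrow> ('w \<Rightarrow>\<^sub>0 'k::field_char_0)) \<Rightarrow> ('u multiset \<Rightarrow>\<^sub>0 'k) set" where
  "hom_kernel \<psi> = {p. LK p {#} = 0 \<and> linext \<psi> p = 0}"

text \<open>By the product rule for psi, the kernel absorbs products on both sides.\<close>
lemma hom_kernel_ideal:
  assumes "fm_hom F (Gmul c) \<psi>"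
  shows "twosided_ideal F (hom_kernel \<psi>)"
  unfolding twosided_ideal_def hom_kernel_def
  by (auto simp: lookup_add linext_add linext_sc mulF_eps hom_Gmul_product_rule[OF assms])

text \<open>The kernel is cut out by the counit and the N coordinate functionals of psi.\<close>
lemma hom_kernel_finite_codim:
  fixes \<psi> :: "'u multiset \<Rightarrow> (nat \<Rightarrow>\<^sub>0 'k::field_char_0)"
  assumes "\<And>a. KS (\<psi> a) \<subseteq> {..<n}"
  shows "finite_codim (hom_kernel \<psi>)"
proof (rule common_kernel_finite_codim)
  let ?fs = "(\<lambda>p. LK p {#}) # map (\<lambda>j p. LK (linext \<psi> p) j) [0..<n]"
  show "\<forall>f\<in>set ?fs. lfun f"
    by (auto simp: lfun_lookup lfun_lookup_lmap lmap_linext)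
  fix r assume r: "\<forall>f\<in>set ?fs. f r = 0"
  have "LK (linext \<psi> r) j = 0" for j
  proof (cases "j < n")
    case False
    then have "LK (\<psi> m) j = 0" for m using assms[of m] by (auto simp: in_keys_iff)
    then show ?thesis by (simp add: lookup_linext)
  qed (use r in auto)
  then show "r \<in> hom_kernel \<psi>" using r by (auto simp: hom_kernel_def intro: poly_mapping_eqI)
qed

text \<open>Surjectivity of the dual map makes psi' injective: pairing psi'(p) with a functional
  g lifting the indicator of a monomial x^a recovers the coefficient of x^a in p.\<close>
lemma dual_surj_imp_inj:
  assumes surj: "\<forall>f::'u multiset \<Rightarrow> 'k. \<exists>g::'w multiset \<Rightarrow> 'k.
      \<forall>a. f a = (\<Sum>m\<in>KS (ind \<psi> a). LK (ind \<psi> a) m * g m)"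
    and zero: "indL \<psi> p = (0 :: 'w multiset \<Rightarrow>\<^sub>0 'k::field_char_0)"
  shows "p = 0"
proof (rule poly_mapping_eqI)
  fix a0
  obtain g where g: "\<forall>a. (if a = a0 then 1 else 0) = (\<Sum>m\<in>KS (ind \<psi> a). LK (ind \<psi> a) m * g m)"
    using spec[OF surj, of "\<lambda>a. if a = a0 then (1::'k) else 0"] by blast
  define \<Phi> where "\<Phi> = (\<lambda>Q::'w multiset \<Rightarrow>\<^sub>0 'k. \<Sum>m\<in>KS Q. LK Q m * g m)"
  have lf: "lfun \<Phi>" unfolding \<Phi>_def by (rule lfun_pair)
  have "\<Phi> (indL \<psi> p) = (\<Sum>a\<in>KS p. LK p a * (if a = a0 then 1 else 0))"
    unfolding indL_def lfun_linext[OF lf] using g by (simp add: \<Phi>_def)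
  also have "\<dots> = LK p a0" by (simp add: in_keys_iff if_distrib cong: if_cong)
  finally show "LK p a0 = LK 0 a0" using zero lfun_zero[OF lf] by simp
qed

lemma indL_lin:
  assumes "\<psi> {#} = 0" shows "indL \<psi> (lin w) = lin (linext \<psi> (lin w))"
proof -
  have ind_single: "ind \<psi> {#i#} = lin (\<psi> {#i#})" for i
  proof -
    have "ind \<psi> {#i#} = TT \<psi> {#i#}"
    proof (rule ind_lin)
      fix x assume "x \<subseteq># {#i#}" "size x \<noteq> 1"
      then have "x = {#}" using size_mset_mono[of x "{#i#}"] by (simp add: le_Suc_eq)
      then show "\<psi> x = 0" using assms by simp
    qed
    then show ?thesis by (simp add: TT_def)
  qed
  have "indL \<psi> (lin w) = linext (\<lambda>i. lin (\<psi> {#i#})) w"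
    by (simp add: indL_def lin_linext linext_comp ind_single)
  also have "\<dots> = lin (linext (\<lambda>i. \<psi> {#i#}) w)"
    by (rule lmap_linext_comp[OF lmap_lin, symmetric])
  finally show ?thesis by (simp add: lin_linext linext_comp)
qed

lemma linear_imp_ideal:
  fixes F :: "'u multiset \<Rightarrow> 'u multiset \<Rightarrow> ('u \<Rightarrow>\<^sub>0 'k::field_char_0)"
  assumes "linear_fm F"
  shows "\<exists>I. twosided_ideal F I \<and> finite_codim I \<and> I \<inter> Prim = {0} \<and> I \<inter> Vsub = {0}"
proof -
  obtain n c and \<psi> :: "'u multiset \<Rightarrow> (nat \<Rightarrow>\<^sub>0 'k)" where
    supp: "\<forall>a. KS (\<psi> a) \<subseteq> {..<n}" and hom: "fm_hom F (Gmul c) \<psi>" and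
    surj: "\<forall>f::'u multiset \<Rightarrow> 'k. \<exists>g::nat multiset \<Rightarrow> 'k.
         \<forall>a. f a = (\<Sum>m\<in>KS (ind \<psi> a). LK (ind \<psi> a) m * g m)"
    using assms unfolding linear_fm_def by blast
  have psi0: "\<psi> {#} = 0" using hom by (simp add: fm_hom_def)
  let ?I = "hom_kernel \<psi>"
  have V: "?I \<inter> Vsub = {0}"
  proof -
    have "lin w = 0" if "lin w \<in> ?I" for w
      using that dual_surj_imp_inj[OF surj, of "lin w"]
      by (simp add: hom_kernel_def indL_lin[of \<psi>, OF psi0])
    then show ?thesis using zero_Vsub by (auto simp: Vsub_def hom_kernel_def)
  qed
  moreover have "?I \<inter> Prim = {0}"
    using V Prim_sub by (auto simp: hom_kernel_def Prim_def copr_def tensor_def)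
  ultimately show ?thesis
    using hom_kernel_ideal[OF hom] hom_kernel_finite_codim supp by blast
qed

section \<open>An ideal as in the theorem makes F linear\<close>

lemma basis_vector_inj: "inj (\<lambda>u. lin (SG u (1::'k::field)))"
proof (rule injI)
  fix u v :: 'a
  assume "lin (SG u (1::'k)) = lin (SG v 1)"
  then have "LK (SG {#u#} (1::'k)) {#u#} = LK (SG {#v#} 1) {#u#}" by simp
  then show "u = v" by (auto simp: lookup_single when_def split: if_splits)
qed

lemma basis_vectors_indep_mod:
  fixes I :: "('u multiset \<Rightarrow>\<^sub>0 'k::field) set"
  assumes V: "I \<inter> Vsub = {0}" and fU: "finite U"
  shows "indep_mod I ((\<lambda>u. lin (SG u 1)) ` U)"
  unfolding indep_mod_def
proof (intro allI impI ballI)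
  let ?x = "\<lambda>u. lin (SG u (1::'k))"
  fix d v assume h: "(\<Sum>v\<in>?x ` U. sc (d v) v) \<in> I" and v: "v \<in> ?x ` U"
  have "(\<Sum>v\<in>?x ` U. sc (d v) v) = (\<Sum>u\<in>U. sc (d (?x u)) (?x u))"
    using sum.reindex[OF inj_on_subset[OF basis_vector_inj subset_UNIV]] by (simp add: o_def)
  also have "\<dots> = lin (\<Sum>u\<in>U. SG u (d (?x u)))"
    by (simp add: lin_sum sc_single)
  finally have "lin (\<Sum>u\<in>U. SG u (d (?x u))) \<in> I \<inter> Vsub" using h by (auto simp: Vsub_def)
  then have z: "(\<Sum>u\<in>U. SG u (d (?x u))) = 0" using V lin_inj[of _ 0] by auto
  have "d (?x u) = 0" if "u \<in> U" for u
  proof -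
    have "d (?x u) = LK (\<Sum>u\<in>U. SG u (d (?x u))) u" using fU that by (simp add: lookup_sum_single)
    then show ?thesis using z by simp
  qed
  then show "d v = 0" using v by blast
qed

text \<open>Finitely many vectors span k[V] modulo I, so V has a finite basis.\<close>
lemma finite_basis_index:
  fixes I :: "('u multiset \<Rightarrow>\<^sub>0 'k::field_char_0) set"
  assumes sub: "subsp I" and fc: "finite_codim I" and V: "I \<inter> Vsub = {0}"
  shows "finite (UNIV :: 'u set)"
proof (rule ccontr)
  assume inf: "infinite (UNIV :: 'u set)"
  obtain bs :: "('u multiset \<Rightarrow>\<^sub>0 'k) list" where
    bs: "\<forall>p. \<exists>cs. length cs = length bs \<and> p - lcomb cs bs \<in> I"
    using fc by (auto simp: finite_codim_lcomb)
  obtain U :: "'u set" where U: "finite U" "card U = Suc (length bs)"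
    using infinite_arbitrarily_large[OF inf] by blast
  have "card ((\<lambda>u. lin (SG u (1::'k))) ` U) = card U"
    using card_image[OF inj_on_subset[OF basis_vector_inj subset_UNIV]] .
  moreover have "card ((\<lambda>u. lin (SG u (1::'k))) ` U) \<le> length bs"
    using card_indep_mod_le[OF sub bs] basis_vectors_indep_mod[OF V U(1)] U(1) by blast
  ultimately show False using U(2) by simp
qed

lemma basis_exists:
  fixes I :: "('u multiset \<Rightarrow>\<^sub>0 'k::field_char_0) set"
  assumes sub: "subsp I" and fc: "finite_codim I" and V: "I \<inter> Vsub = {0}"
  shows "\<exists>N (E :: nat \<Rightarrow> ('u multiset \<Rightarrow>\<^sub>0 'k)) (idx :: 'u \<Rightarrow> nat).
     (\<forall>p. \<exists>c. p - (\<Sum>j<N. sc (c j) (E j)) \<in> I) \<and>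
     (\<forall>c. (\<Sum>j<N. sc (c j) (E j)) \<in> I \<longrightarrow> (\<forall>j<N. c j = 0)) \<and>
     inj idx \<and> (\<forall>u. idx u < N \<and> E (idx u) = lin (SG u 1))"
proof -
  let ?x = "\<lambda>u. lin (SG u (1::'k))"
  have finU: "finite (UNIV :: 'u set)" by (rule finite_basis_index[OF sub fc V])
  have iX: "indep_mod I (range ?x)" by (rule basis_vectors_indep_mod[OF V finU])
  obtain T where T: "range ?x \<subseteq> T" "finite T" "spanT I T" "indep_mod I T"
    using extend_to_basis_mod[OF sub fc finite_imageI[OF finU] iX] by blast
  obtain N :: nat and E where bij: "bij_betw E {..<N} T" and
    span: "\<forall>p. \<exists>c. p - (\<Sum>j<N. sc (c j) (E j)) \<in> I" and
    indep: "\<forall>c. (\<Sum>j<N. sc (c j) (E j)) \<in> I \<longrightarrow> (\<forall>j<N. c j = 0)"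
    using indexed_basis[OF T(2,3,4)] by blast
  define idx where "idx u = inv_into {..<N} E (?x u)" for u
  have idx: "idx u < N" "E (idx u) = ?x u" for u
  proof -
    have x: "?x u \<in> E ` {..<N}" using T(1) bij by (auto simp: bij_betw_def)
    show "idx u < N" using inv_into_into[OF x] by (simp add: idx_def)
    show "E (idx u) = ?x u" using f_inv_into_f[OF x] by (simp add: idx_def)
  qed
  have "inj idx"
  proof (rule injI)
    fix u v assume "idx u = idx v"
    then have "?x u = ?x v" using idx(2)[of u] idx(2)[of v] by simp
    then show "u = v" by (rule injD[OF basis_vector_inj])
  qed
  with span indep idx show ?thesis by (intro exI[of _ N] exI[of _ E] exI[of _ idx]) simp
qed

locale quotient_basis =
  fixes F :: "'u multiset \<Rightarrow> 'u multiset \<Rightarrow> ('u \<Rightarrow>\<^sub>0 'k::field_char_0)"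
    and I :: "('u multiset \<Rightarrow>\<^sub>0 'k) set" and N :: nat and E :: "nat \<Rightarrow> ('u multiset \<Rightarrow>\<^sub>0 'k)"
    and idx :: "'u \<Rightarrow> nat"
  assumes unital: "unital_fm F" and ideal: "twosided_ideal F I"
    and spanning: "\<And>p. \<exists>c. p - (\<Sum>j<N. sc (c j) (E j)) \<in> I"
    and independent: "\<And>c j. (\<Sum>j<N. sc (c j) (E j)) \<in> I \<Longrightarrow> j < N \<Longrightarrow> c j = 0"
    and idx: "inj idx" "\<And>u. idx u < N" "\<And>u. E (idx u) = lin (SG u 1)"
begin

lemma sub: "subsp I" by (rule twosided_subsp[OF ideal])

lemma mul_left_in: "x \<in> I \<Longrightarrow> mulF F x p \<in> I" using ideal by (simp add: twosided_ideal_def)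
lemma mul_right_in: "x \<in> I \<Longrightarrow> mulF F p x \<in> I" using ideal by (simp add: twosided_ideal_def)

definition coeff :: "('u multiset \<Rightarrow>\<^sub>0 'k) \<Rightarrow> nat \<Rightarrow> 'k" where
  "coeff p = (SOME c. p - (\<Sum>j<N. sc (c j) (E j)) \<in> I)"

definition coords :: "('u multiset \<Rightarrow>\<^sub>0 'k) \<Rightarrow> (nat \<Rightarrow>\<^sub>0 'k)" where
  "coords p = (\<Sum>j<N. SG j (coeff p j))"

lemma coeff_spec: "p - (\<Sum>j<N. sc (coeff p j) (E j)) \<in> I"
  unfolding coeff_def using spanning by (rule someI_ex)

lemma lookup_coords: "LK (coords p) j = (if j < N then coeff p j else 0)"
  by (simp add: coords_def lookup_sum_single)

lemma keys_coords: "KS (coords p) \<subseteq> {..<N}"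
  by (auto simp: in_keys_iff lookup_coords split: if_splits)

lemma coeff_unique:
  assumes "p - (\<Sum>j<N. sc (c j) (E j)) \<in> I" "p - (\<Sum>j<N. sc (c' j) (E j)) \<in> I" "j < N"
  shows "c j = c' j"
proof -
  have "(p - (\<Sum>j<N. sc (c' j) (E j))) - (p - (\<Sum>j<N. sc (c j) (E j))) \<in> I"
    by (rule subsp_diff[OF sub assms(2) assms(1)])
  moreover have "(p - (\<Sum>j<N. sc (c' j) (E j))) - (p - (\<Sum>j<N. sc (c j) (E j))) =
     (\<Sum>j<N. sc (c j - c' j) (E j))"
    by (simp add: sc_diff_left sum_subtractf)
  ultimately have "(\<Sum>j<N. sc (c j - c' j) (E j)) \<in> I" by simp
  then have "c j - c' j = 0" using independent[of "\<lambda>j. c j - c' j"] assms(3) by blast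
  then show ?thesis by simp
qed

lemma coords_char:
  assumes "p - (\<Sum>j<N. sc (c j) (E j)) \<in> I"
  shows "coords p = (\<Sum>j<N. SG j (c j))"
proof (rule poly_mapping_eqI)
  fix j
  show "LK (coords p) j = LK (\<Sum>j<N. SG j (c j)) j"
    using coeff_unique[OF coeff_spec assms] by (simp add: lookup_coords lookup_sum_single)
qed

lemma coords_expand: "p - (\<Sum>j<N. sc (LK (coords p) j) (E j)) \<in> I"
  using coeff_spec by (simp add: lookup_coords)

lemma lmap_coords: "lmap coords"
proof -
  have "coords (p + q) = coords p + coords q" for p q
  proof -
    have "(p + q) - (\<Sum>j<N. sc (coeff p j + coeff q j) (E j)) =
        (p - (\<Sum>j<N. sc (coeff p j) (E j))) + (q - (\<Sum>j<N. sc (coeff q j) (E j)))"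
      by (simp add: sc_add_left sum.distrib)
    also have "\<dots> \<in> I" using coeff_spec by (intro subsp_add[OF sub])
    finally have "coords (p + q) = (\<Sum>j<N. SG j (coeff p j + coeff q j))" by (rule coords_char)
    then show ?thesis by (simp add: coords_def single_add sum.distrib)
  qed
  moreover have "coords (sc a p) = sc a (coords p)" for a p
  proof -
    have "sc a p - (\<Sum>j<N. sc (a * coeff p j) (E j)) = sc a (p - (\<Sum>j<N. sc (coeff p j) (E j)))"
      by (simp add: sc_diff sc_sum)
    also have "\<dots> \<in> I" using coeff_spec by (intro subsp_sc[OF sub])
    finally have "coords (sc a p) = (\<Sum>j<N. SG j (a * coeff p j))" by (rule coords_char)
    then show ?thesis by (simp add: coords_def sc_sum sc_single)
  qed
  ultimately show ?thesis by (simp add: lmap_def)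
qed

lemma coords_ideal: "p \<in> I \<Longrightarrow> coords p = 0"
  using coords_char[of p "\<lambda>j. 0"] by simp

lemma coords_basis: "i < N \<Longrightarrow> coords (E i) = SG i 1"
proof -
  assume i: "i < N"
  have "(\<Sum>j<N. sc (if j = i then 1 else 0) (E j)) = (\<Sum>j<N. if j = i then E j else 0)"
    by (intro sum.cong refl) auto
  also have "\<dots> = E i" using i by simp
  finally have "E i - (\<Sum>j<N. sc (if j = i then 1 else 0) (E j)) \<in> I" using subsp_0[OF sub] by simp
  then have "coords (E i) = (\<Sum>j<N. SG j (if j = i then 1 else 0))" by (rule coords_char)
  also have "\<dots> = (\<Sum>j<N. if j = i then SG j 1 else 0)" by (intro sum.cong refl) auto
  also have "\<dots> = SG i 1" using i by simp
  finally show ?thesis .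
qed

definition struct_const :: "nat \<Rightarrow> nat \<Rightarrow> (nat \<Rightarrow>\<^sub>0 'k)" where
  "struct_const i j = coords (mulF F (E i) (E j))"

text \<open>Since I is a two-sided ideal, coordinates are multiplicative.\<close>
lemma coords_mul: "coords (mulF F x y) = prodA struct_const (coords x) (coords y)"
proof -
  define x' where "x' = (\<Sum>i<N. sc (LK (coords x) i) (E i))"
  define y' where "y' = (\<Sum>j<N. sc (LK (coords y) j) (E j))"
  have dx: "x - x' \<in> I" and dy: "y - y' \<in> I" using coords_expand by (simp_all add: x'_def y'_def)
  have "mulF F x y - mulF F x' y' = mulF F (x - x') y + mulF F x' (y - y')"
    by (simp add: lmap_diff[OF lmap_mulF1] lmap_diff[OF lmap_mulF2])
  also have "\<dots> \<in> I" using dx dy by (intro subsp_add[OF sub] mul_left_in mul_right_in)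
  finally have "coords (mulF F x y - mulF F x' y') = 0" by (rule coords_ideal)
  then have "coords (mulF F x y) = coords (mulF F x' y')" by (simp add: lmap_diff[OF lmap_coords])
  also have "mulF F x' y' = (\<Sum>i<N. sc (LK (coords x) i) (mulF F (E i) y'))"
    unfolding x'_def by (rule lmap_sum_sc[OF lmap_mulF1])
  also have "\<dots> = (\<Sum>i<N. sc (LK (coords x) i) (\<Sum>j<N. sc (LK (coords y) j) (mulF F (E i) (E j))))"
    unfolding y'_def by (simp only: lmap_sum_sc[OF lmap_mulF2])
  finally have "coords (mulF F x y) =
      (\<Sum>i<N. sc (LK (coords x) i) (\<Sum>j<N. sc (LK (coords y) j) (struct_const i j)))"
    by (simp add: lmap_sum_sc[OF lmap_coords] struct_const_def)
  also have "\<dots> = prodA struct_const (coords x) (coords y)"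
    unfolding prodA_linext by (simp add: linext_superset[OF _ keys_coords])
  finally show ?thesis .
qed

definition psi :: "'u multiset \<Rightarrow> (nat \<Rightarrow>\<^sub>0 'k)" where
  "psi a = coords (SG a 1 - sc (eps a) 1)"

lemma psi_empty: "psi {#} = 0"
  by (simp add: psi_def eps_def coords_ideal subsp_0[OF sub])

lemma linext_psi: "linext psi p = coords (p - sc (LK p {#}) 1)"
proof -
  have "linext psi p = coords (linext (\<lambda>a. SG a 1 - sc (eps a) 1) p)"
    unfolding psi_def by (rule lmap_linext_comp[OF lmap_coords, symmetric])
  also have "linext (\<lambda>a. SG a 1 - sc (eps a) 1) p = p - sc (LK p {#}) 1"
    by (simp add: linext_fun_diff linext_id linext_fun_sc sum_eps)
  finally show ?thesis .
qed

text \<open>Writing p = eps(p) 1 + x and q = eps(q) 1 + y, unitality of F gives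
  pq - eps(p) eps(q) 1 = eps(q) x + eps(p) y + xy, which is the product rule of G.\<close>
lemma psi_hom: "fm_hom F (Gmul struct_const) psi"
  unfolding fm_hom_def
proof (intro conjI allI)
  show "psi {#} = 0" by (rule psi_empty)
  fix p q :: "'u multiset \<Rightarrow>\<^sub>0 'k"
  define ep where "ep = LK p {#}"
  define eq where "eq = LK q {#}"
  define x where "x = p - sc ep 1"
  define y where "y = q - sc eq 1"
  have "bilin (Gmul struct_const) (indL psi p) (indL psi q) = sc eq (coords x) + sc ep (coords y) + coords (mulF F x y)"
    by (simp add: bilin_Gmul indL_eps indL_pi[of psi, OF psi_empty] linext_psi coords_mul x_def y_def ep_def eq_def)
  also have "\<dots> = coords (sc eq x + sc ep y + mulF F x y)"
    by (simp add: lmap_add[OF lmap_coords] lmap_sc[OF lmap_coords])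
  also have "sc eq x + sc ep y + mulF F x y = mulF F p q - sc (ep * eq) 1"
  proof -
    have "mulF F p y = mulF F p q - sc eq p" "mulF F 1 y = q - sc eq 1"
      unfolding y_def by (simp_all add: lmap_diff[OF lmap_mulF2] lmap_sc[OF lmap_mulF2]
          mulF_one_right[OF unital] mulF_one_left[OF unital])
    then have "mulF F x y = (mulF F p q - sc eq p) - sc ep (q - sc eq 1)"
      unfolding x_def by (simp add: lmap_diff[OF lmap_mulF1] lmap_sc[OF lmap_mulF1])
    then show ?thesis unfolding x_def y_def
      by (intro poly_mapping_eqI) (simp add: lookup_add lookup_minus algebra_simps)
  qed
  also have "coords (mulF F p q - sc (ep * eq) 1) = linext psi (mulF F p q)"
    by (simp add: linext_psi mulF_eps ep_def eq_def)
  finally show "bilin (Gmul struct_const) (indL psi p) (indL psi q) = linext psi (mulF F p q)" .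
qed

lemma psi_single: "psi {#u#} = SG (idx u) 1"
  using coords_basis[OF idx(2)] idx(3) by (simp add: psi_def eps_def)

lemma ind_psi_top: "size a \<le> size m \<Longrightarrow> LK (ind psi a) m = (if m = image_mset idx a then 1 else 0)"
proof (cases "size m = size a")
  case True
  then have "LK (ind psi a) m = LK (TT psi a) m" by (intro ind_top psi_empty)
  also have "TT psi a = SG (image_mset idx a) 1" by (rule TT_single) (simp add: psi_single)
  finally show ?thesis by (simp add: lookup_single when_def eq_commute)
qed (auto simp: lookup_ind)

end

text \<open>Recursive solution by increasing degree of the system f(a) = sum_m Phi(a)_m g(m).\<close>
primrec tri_solve :: "('a \<Rightarrow> 'k::field) \<Rightarrow> ('a \<Rightarrow> (nat multiset \<Rightarrow>\<^sub>0 'k)) \<Rightarrow> ('a \<Rightarrow> nat multiset) \<Rightarrow>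
    nat \<Rightarrow> nat multiset \<Rightarrow> 'k" where
  "tri_solve f \<Phi> K 0 m = 0"
| "tri_solve f \<Phi> K (Suc k) m = (if size m < k then tri_solve f \<Phi> K k m else if m \<in> range K then
     f (inv K m) - (\<Sum>m'\<in>KS (\<Phi> (inv K m)) - {m}. LK (\<Phi> (inv K m)) m' * tri_solve f \<Phi> K k m') else 0)"

lemma triangular:
  fixes \<Phi> :: "'a \<Rightarrow> (nat multiset \<Rightarrow>\<^sub>0 'k::field)" and K :: "'a \<Rightarrow> nat multiset" and sz :: "'a \<Rightarrow> nat"
  assumes injK: "inj K" and sizeK: "\<And>a. size (K a) = sz a"
    and top: "\<And>a m. sz a \<le> size m \<Longrightarrow> LK (\<Phi> a) m = (if m = K a then 1 else 0)"
  shows "\<exists>g. \<forall>a. f a = (\<Sum>m\<in>KS (\<Phi> a). LK (\<Phi> a) m * g m)"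
proof -
  define g where "g m = tri_solve f \<Phi> K (Suc (size m)) m" for m
  have stable: "size m < k \<Longrightarrow> tri_solve f \<Phi> K k m = g m" for k m
  proof (induction k)
    case (Suc k)
    show ?case
    proof (cases "size m < k")
      case False
      then have "size m = k" using Suc.prems by simp
      then show ?thesis by (simp add: g_def)
    qed (use Suc.IH in simp)
  qed simp
  have "f a = (\<Sum>m\<in>KS (\<Phi> a). LK (\<Phi> a) m * g m)" for a
  proof -
    define m0 where "m0 = K a"
    have c0: "LK (\<Phi> a) m0 = 1" using top[of a m0] sizeK by (simp add: m0_def)
    then have k0: "m0 \<in> KS (\<Phi> a)" by (simp add: in_keys_iff)
    have small: "size m' < sz a" if "m' \<in> KS (\<Phi> a) - {m0}" for m'
    proof (rule ccontr)
      assume "\<not> size m' < sz a"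
      then have "LK (\<Phi> a) m' = 0" using top[of a m'] that by (simp add: m0_def)
      then show False using that by (simp add: in_keys_iff)
    qed
    have inv0: "inv K m0 = a" using injK by (simp add: m0_def)
    have "g m0 = tri_solve f \<Phi> K (Suc (sz a)) m0" by (simp add: g_def m0_def sizeK)
    also have "\<dots> = f a - (\<Sum>m'\<in>KS (\<Phi> a) - {m0}. LK (\<Phi> a) m' * tri_solve f \<Phi> K (sz a) m')"
      using inv0 sizeK by (simp add: m0_def)
    also have "\<dots> = f a - (\<Sum>m'\<in>KS (\<Phi> a) - {m0}. LK (\<Phi> a) m' * g m')"
      using small stable by (intro arg_cong2[where f=minus] refl sum.cong) auto
    finally have "g m0 = f a - (\<Sum>m'\<in>KS (\<Phi> a) - {m0}. LK (\<Phi> a) m' * g m')" .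
    then show ?thesis using k0 c0 by (simp add: sum.remove)
  qed
  then show ?thesis by blast
qed

lemma inj_image_mset: "inj f \<Longrightarrow> inj (image_mset f)"
proof (rule injI)
  fix a b assume "inj f" "image_mset f a = image_mset f b"
  then have "image_mset (inv f) (image_mset f a) = image_mset (inv f) (image_mset f b)" by simp
  then show "a = b" using \<open>inj f\<close> by (simp add: image_mset.compositionality o_def)
qed

context quotient_basis
begin

lemma linear: "linear_fm F"
  unfolding linear_fm_def
proof (intro exI conjI)
  show "\<forall>i<N. \<forall>j<N. KS (struct_const i j) \<subseteq> {..<N}" by (simp add: struct_const_def keys_coords)
  show "\<forall>a. KS (psi a) \<subseteq> {..<N}" by (simp add: psi_def keys_coords)
  show "fm_hom F (Gmul struct_const) psi" by (rule psi_hom)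
  show "\<forall>f::'u multiset \<Rightarrow> 'k. \<exists>g::nat multiset \<Rightarrow> 'k.
         \<forall>a. f a = (\<Sum>m\<in>KS (ind psi a). LK (ind psi a) m * g m)"
    by (intro allI triangular[where K="image_mset idx" and sz=size])
      (auto simp: inj_image_mset idx ind_psi_top)
qed

end

lemma ideal_imp_linear:
  fixes F :: "'u multiset \<Rightarrow> 'u multiset \<Rightarrow> ('u \<Rightarrow>\<^sub>0 'k::field_char_0)"
  assumes "unital_fm F" and ideal: "twosided_ideal F I" "finite_codim I" "I \<inter> Vsub = {0}"
  shows "linear_fm F"
proof -
  obtain N and E :: "nat \<Rightarrow> ('u multiset \<Rightarrow>\<^sub>0 'k)" and idx :: "'u \<Rightarrow> nat" where
    "\<forall>p. \<exists>c. p - (\<Sum>j<N. sc (c j) (E j)) \<in> I"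
    "\<forall>c. (\<Sum>j<N. sc (c j) (E j)) \<in> I \<longrightarrow> (\<forall>j<N. c j = 0)"
    "inj idx" "\<forall>u. idx u < N \<and> E (idx u) = lin (SG u 1)"
    using basis_exists[OF twosided_subsp[OF ideal(1)] ideal(2,3)] by blast
  then interpret quotient_basis F I N E idx
    using assms by unfold_locales auto
  show ?thesis by (rule linear)
qed

theorem mainTheorem14:
  fixes F :: "'u multiset \<Rightarrow> 'u multiset \<Rightarrow> ('u \<Rightarrow>\<^sub>0 'k::field_char_0)"
  assumes "unital_fm F"
  shows "linear_fm F \<longleftrightarrow>
    (\<exists>I. twosided_ideal F I \<and> finite_codim I \<and> I \<inter> Prim = {0} \<and> I \<inter> Vsub = {0})"
  using linear_imp_ideal ideal_imp_linear[OF assms] by blast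

end
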